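(* Let $r\in\mathcal{Y}_n$. In $\mathit{LR}$ (the graded dual of $\mathcal{Y}Sym$, with basis $M^*_t$ dual to $M_t$), $$\Delta(M^*_r)=\sum_{\substack{\mathsf{R}\subseteq[n]\\ \lambda(\pi_{\mathsf{R}})\le r}}M^*_{r|_{\mathsf{R}}}\otimes M^*_{r|_{\mathsf{R}^c}}.$$
   Context: Permutations in one-line notation, products are compositions; $\mathrm{st}(a_1,..,a_p)$ is the permutation with the same relative order as distinct integers $a_i$. For $\sigma\in\mathfrak{S}_p,\tau\in\mathfrak{S}_q$: $\sigma\vee\tau=(\sigma(1)+q,..,\sigma(p)+q,p+q+1,\tau(1),..,\tau(q))$, $\sigma/\tau=(\sigma(1),..,\sigma(p),\tau(1)+p,..,\tau(q)+p)$. For $\mathsf{R}=\{R_1<\dots<R_p\}\subseteq[n]$ with complement $\mathsf{R}^c=\{R^c_1<\dots<R^c_q\}$, $\pi_{\mathsf{R}}\in\mathfrak{S}_n$ is defined by $\pi_{\mathsf{R}}^{-1}=(R_1,\dots,R_p,R^c_1,\dots,R^c_q)$ in one-line notation. For $\rho\in\mathfrak{S}_n$, $\rho|_{\mathsf{R}}=\mathrm{st}(\rho(R_1),\dots,\rho(R_p))$, and for $r\in\mathcal{Y}_n$, $r|_{\mathsf{R}}=\lambda(\gamma(r)|_{\mathsf{R}})$. Trees: $\mathcal{Y}_n$ = rooted planar binary trees with $n$ internal nodes, $\mathcal{Y}_0=\{|\}$; $s\vee t$ = root with left subtree $s$ and right subtree $t$. Tamari order: generated by replacing a subtree $(a\vee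 b)\vee c$ by the larger $a\vee(b\vee c)$. $\lambda(\mathrm{id}_0)=|$, $\lambda(\sigma)=\lambda(\mathrm{st}(\sigma(1..j-1)))\vee\lambda(\mathrm{st}(\sigma(j+1..n)))$ where $j=\sigma^{-1}(n)$; $\gamma(|)=\mathrm{id}_0$, $\gamma(t)=\gamma(t_l)\vee\gamma(t_r)$. $\mathcal{Y}Sym$: graded connected Hopf algebra over $\mathbb{Q}$ with basis $F_t$. Leaves of $t\in\mathcal{Y}_p$ numbered $0..p$; splitting at leaf $i$: $|\to(|,|)$; $t=t_l\vee t_r\to(a,b\vee t_r)$ if leaf $i$ in $t_l$ and $t_l\to(a,b)$, $\to(t_l\vee c,d)$ if in $t_r$ and $t_r\to(c,d)$. $\Delta(F_t)=\sum_iF_{t_0}\otimes F_{t_1}$. For $s\in\mathcal{Y}_q$, $F_t\cdot F_s=\sum F_{(t_0,..,t_q)/s}$ over multisets $i_1\le\dots\le i_q$ of leaves of $t$, where $t\to(t_0,..,t_q)$ splits $t$ at $i_q$ into $(t',t_q)$ and divides $t'$ at $i_1..i_{q-1}$, and $(t_0,..,t_q)/s$ grafts the root of $t_i$ onto leaf $i$ of $s$. $M_t=\sum_{t\le s}\mu_{\mathcal{Y}_n}(t,s)F_s$. The coproduct of $\mathit{LR}$ is dual to the product of $\mathcal{Y}Sym$. *)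

theory Defs
  imports Complex_Main
begin

datatype tree = Leaf | Node tree tree

fun nodes :: "tree \<Rightarrow> nat" where
  "nodes Leaf = 0"
| "nodes (Node l r) = Suc (nodes l + nodes r)"

definition Ytrees :: "nat \<Rightarrow> tree set" where
  "Ytrees n = {t. nodes t = n}"

inductive tamari_step :: "tree \<Rightarrow> tree \<Rightarrow> bool" where
  rot: "tamari_step (Node (Node a b) c) (Node a (Node b c))"
| left: "tamari_step l l' \<Longrightarrow> tamari_step (Node l r) (Node l' r)"
| right: "tamari_step r r' \<Longrightarrow> tamari_step (Node l r) (Node l r')"

definition tamari_le :: "tree \<Rightarrow> tree \<Rightarrow> bool" where
  "tamari_le = tamari_step\<^sup>*\<^sup>*"

definition tamari_mobius :: "tree \<Rightarrow> tree \<Rightarrow> int" where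
  "tamari_mobius = (THE mu.
      (\<forall>t s. \<not> tamari_le t s \<longrightarrow> mu t s = 0) \<and>
      (\<forall>t s. tamari_le t s \<longrightarrow>
          (\<Sum>u\<in>{u. tamari_le t u \<and> tamari_le u s}. mu t u) = (if t = s then 1 else 0)))"

text \<open>Splitting a tree at leaf i (leaves numbered 0..nodes t from left to right).\<close>
fun split_at :: "tree \<Rightarrow> nat \<Rightarrow> tree \<times> tree" where
  "split_at Leaf i = (Leaf, Leaf)"
| "split_at (Node l r) i =
     (if i \<le> nodes l then (let (a, b) = split_at l i in (a, Node b r))
      else (let (c, d) = split_at r (i - nodes l - 1) in (Node l c, d)))"

text \<open>Dividing t at i_1 <= ... <= i_q (list given in reverse order): split at the last
  index i_q into (t', t_q) and divide t' at the remaining ones.\<close>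
fun divide_rev :: "tree \<Rightarrow> nat list \<Rightarrow> tree list" where
  "divide_rev t [] = [t]"
| "divide_rev t (i # js) = (let (t', tq) = split_at t i in divide_rev t' js @ [tq])"

definition divide :: "tree \<Rightarrow> nat list \<Rightarrow> tree list" where
  "divide t is = divide_rev t (rev is)"

text \<open>Grafting: (t_0,...,t_q)/s grafts the root of t_i onto leaf i of s.\<close>
fun graft :: "tree \<Rightarrow> tree list \<Rightarrow> tree" where
  "graft Leaf ts = hd ts"
| "graft (Node l r) ts = Node (graft l (take (Suc (nodes l)) ts)) (graft r (drop (Suc (nodes l)) ts))"

text \<open>Elements of YSym are represented by their coordinate function in the F basis
  (\<open>x u\<close> = coefficient of F_u).  Coefficient of F_u in F_t * F_s: the number of
  multisets i_1 <= ... <= i_q of leaves of t (q = nodes s) with (t_0,...,t_q)/s = u.\<close>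
definition prodF :: "tree \<Rightarrow> tree \<Rightarrow> tree \<Rightarrow> rat" where
  "prodF t s u = of_nat (card {is. length is = nodes s \<and> sorted is \<and> set is \<subseteq> {0..nodes t}
                                 \<and> graft s (divide t is) = u})"

text \<open>M_t = sum over t <= s of mu(t,s) F_s, as an F-coordinate function.\<close>
definition Mvec :: "tree \<Rightarrow> tree \<Rightarrow> rat" where
  "Mvec t u = of_int (tamari_mobius t u)"

definition prodM :: "tree \<Rightarrow> tree \<Rightarrow> tree \<Rightarrow> rat" where
  "prodM s t u = (\<Sum>s'\<in>Ytrees (nodes s). \<Sum>t'\<in>Ytrees (nodes t).
        Mvec s s' * Mvec t t' * prodF s' t' u)"

text \<open>Coefficient of M_r in an element x (the homogeneous component of degree nodes r
  of x expanded in the M basis of that component).  This is the pairing with M*_r.\<close>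
definition Mcoord :: "(tree \<Rightarrow> rat) \<Rightarrow> tree \<Rightarrow> rat" where
  "Mcoord x r = (THE c. (\<forall>v. v \<notin> Ytrees (nodes r) \<longrightarrow> c v = 0) \<and>
        (\<forall>u\<in>Ytrees (nodes r). x u = (\<Sum>v\<in>Ytrees (nodes r). c v * Mvec v u))) r"

text \<open>The coproduct of LR is dual to the product of YSym: the coefficient of
  M*_s \<otimes> M*_t in Delta(M*_r) is the coefficient of M_r in M_s * M_t.
  \<open>LR_coprod_M r\<close> is Delta(M*_r) as a coordinate function on pairs (s,t).\<close>
definition LR_coprod_M :: "tree \<Rightarrow> tree \<times> tree \<Rightarrow> rat" where
  "LR_coprod_M r = (\<lambda>(s, t). Mcoord (prodM s t) r)"

definition st :: "nat list \<Rightarrow> nat list" where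
  "st xs = map (\<lambda>x. card {y \<in> set xs. y \<le> x}) xs"

lemma length_st[simp]: "length (st xs) = length xs"
  by (simp add: st_def)

lemma takeWhile_shorter: "\<exists>y\<in>set xs. \<not> P y \<Longrightarrow> length (takeWhile P xs) < length xs"
  by (induction xs) auto

function lam :: "nat list \<Rightarrow> tree" where
  "lam [] = Leaf"
| "lam (x # xs) =
     Node (lam (st (takeWhile (\<lambda>y. y \<noteq> Max (set (x # xs))) (x # xs))))
          (lam (st (tl (dropWhile (\<lambda>y. y \<noteq> Max (set (x # xs))) (x # xs)))))"
  by pat_completeness auto
termination
proof (relation "measure length")
  fix x :: nat and xs :: "nat list"
  let ?P = "\<lambda>y. y \<noteq> Max (set (x # xs))"
  have "Max (set (x # xs)) \<in> set (x # xs)" using Max_in[of "set (x # xs)"] by simp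
  then have "\<not> (\<forall>y\<in>set (x # xs). ?P y)" by blast
  then have "length (takeWhile ?P (x # xs)) < length (x # xs)"
    by (intro takeWhile_shorter) blast
  then show "(st (takeWhile ?P (x # xs)), x # xs) \<in> measure length" by simp
  have "length (tl (dropWhile ?P (x # xs))) < length (x # xs)"
    using length_dropWhile_le[of ?P "x # xs"] by simp
  then show "(st (tl (dropWhile ?P (x # xs))), x # xs) \<in> measure length" by simp
qed auto

definition perm_vee :: "nat list \<Rightarrow> nat list \<Rightarrow> nat list" where
  "perm_vee \<sigma> \<tau> = map (\<lambda>x. x + length \<tau>) \<sigma> @ [length \<sigma> + length \<tau> + 1] @ \<tau>"

fun gam :: "tree \<Rightarrow> nat list" where
  "gam Leaf = []"
| "gam (Node l r) = perm_vee (gam l) (gam r)"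

definition perm_inv :: "nat list \<Rightarrow> nat list" where
  "perm_inv w = map (\<lambda>k. Suc (LEAST i. i < length w \<and> w ! i = k)) [1..<Suc (length w)]"

definition piR :: "nat \<Rightarrow> nat set \<Rightarrow> nat list" where
  "piR n R = perm_inv (sorted_list_of_set R @ sorted_list_of_set ({1..n} - R))"

definition perm_restr :: "nat list \<Rightarrow> nat set \<Rightarrow> nat list" where
  "perm_restr \<rho> R = st (map (\<lambda>i. \<rho> ! (i - 1)) (sorted_list_of_set R))"

definition tree_restr :: "tree \<Rightarrow> nat set \<Rightarrow> tree" where
  "tree_restr r R = lam (perm_restr (gam r) R)"

end

theory Submission
  imports Defs
begin

text \<open>Trees are compared through their left-descendant pairs (\<open>ldesc\<close> below): the Tamari
  order is reverse inclusion of these sets, and the sets belonging to \<open>lambda(sigma)\<close>, to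
  \<open>r|R\<close> and to every term of a product \<open>F_s' F_t'\<close> can be computed from permutations and
  words.

  By duality the coefficient of \<open>M*_s \<otimes> M*_t\<close> in \<open>Delta(M*_r)\<close> is the coefficient of
  \<open>M_r\<close> in \<open>M_s M_t\<close>. By Moebius inversion this is the sum over \<open>s \<le> s'\<close> and
  \<open>t \<le> t'\<close> of \<open>mu(s, s') mu(t, t')\<close> times the number of terms \<open>F_u\<close> of \<open>F_s' F_t'\<close>
  with \<open>u \<le> r\<close>. Such a term is a shuffle of the nodes of \<open>s'\<close> and \<open>t'\<close>, determined by
  the set \<open>R\<close> of positions taken by the nodes of \<open>s'\<close>, and \<open>u \<le> r\<close> splits into the three
  conditions \<open>lambda(pi_R) \<le> r\<close>, \<open>s' \<le> r|R\<close> and \<open>t' \<le> r|R\<^sup>c\<close>. Summing the Moebius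
  function against the last two leaves exactly the sets \<open>R\<close> with \<open>r|R = s\<close> and
  \<open>r|R\<^sup>c = t\<close>.\<close>

section \<open>Left-descendant pairs and the Tamari order\<close>

definition shift_pairs :: "nat \<Rightarrow> (nat \<times> nat) set \<Rightarrow> (nat \<times> nat) set" where
  "shift_pairs k S = (\<lambda>(i, j). (i + k, j + k)) ` S"

lemma mem_shift_pairs: "(a, b) \<in> shift_pairs k S \<longleftrightarrow> k \<le> a \<and> k \<le> b \<and> (a - k, b - k) \<in> S"
  unfolding shift_pairs_def by force

text \<open>Numbering the internal nodes of \<open>t\<close> by \<open>0, \<dots>, nodes t - 1\<close> in in-order,
  \<open>(i, j) \<in> ldesc t\<close> means that node \<open>i\<close> lies in the left subtree of node \<open>j\<close>.\<close>

fun ldesc :: "tree \<Rightarrow> (nat \<times> nat) set" where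
  "ldesc Leaf = {}"
| "ldesc (Node l r) =
     ldesc l \<union> {(i, nodes l) | i. i < nodes l} \<union> shift_pairs (Suc (nodes l)) (ldesc r)"

lemma mem_ldesc_Node: "(i, j) \<in> ldesc (Node l r) \<longleftrightarrow>
   (i, j) \<in> ldesc l \<or> (i < nodes l \<and> j = nodes l) \<or>
   (Suc (nodes l) \<le> i \<and> Suc (nodes l) \<le> j \<and> (i - Suc (nodes l), j - Suc (nodes l)) \<in> ldesc r)"
  by (auto simp: mem_shift_pairs)

declare ldesc.simps(2)[simp del]

lemma ldesc_bounded: "(i, j) \<in> ldesc t \<Longrightarrow> i < j \<and> j < nodes t"
  by (induction t arbitrary: i j) (auto simp: mem_ldesc_Node, fastforce+)

lemma ldesc_left_closed: "(i, j) \<in> ldesc t \<Longrightarrow> i \<le> k \<Longrightarrow> k < j \<Longrightarrow> (k, j) \<in> ldesc t"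
proof (induction t arbitrary: i j k)
  case (Node l r)
  then show ?case
    using Node.IH(2)[of "i - Suc (nodes l)" "j - Suc (nodes l)" "k - Suc (nodes l)"]
      ldesc_bounded[of i j l]
    by (auto simp: mem_ldesc_Node)
qed simp

lemma finite_ldesc: "finite (ldesc t)"
  by (rule finite_subset[of _ "{..<nodes t} \<times> {..<nodes t}"]) (auto dest: ldesc_bounded)

lemma ldesc_Node_left: "j < nodes l \<Longrightarrow> (i, j) \<in> ldesc (Node l r) \<longleftrightarrow> (i, j) \<in> ldesc l"
  by (simp add: mem_ldesc_Node)

lemma ldesc_Node_right:
  "(Suc (nodes l) + i, Suc (nodes l) + j) \<in> ldesc (Node l r) \<longleftrightarrow> (i, j) \<in> ldesc r"
  using ldesc_bounded[of "Suc (nodes l) + i" "Suc (nodes l) + j" l] by (auto simp: mem_ldesc_Node)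

lemma ldesc_Node_root: "(nodes l, j) \<notin> ldesc (Node l r)"
  using ldesc_bounded[of "nodes l" j l] by (auto simp: mem_ldesc_Node)

lemma split_at_0: "split_at s 0 = (Leaf, s)"
  by (induction s) auto

lemma split_at_nodes: "split_at s (nodes s) = (s, Leaf)"
  by (induction s) (auto simp: split_at_0)

lemma nodes_split_at:
  "i \<le> nodes s \<Longrightarrow> nodes (fst (split_at s i)) = i \<and> nodes (snd (split_at s i)) = nodes s - i"
  by (induction s arbitrary: i) (auto simp: split_beta)

lemma ldesc_split_at_fst:
  "i \<le> nodes s \<Longrightarrow> (a, b) \<in> ldesc (fst (split_at s i)) \<longleftrightarrow> (a, b) \<in> ldesc s \<and> b < i"
proof (induction s arbitrary: i a b)
  case (Node l r)
  show ?case
  proof (cases "i \<le> nodes l")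
    case True
    then show ?thesis using Node.IH(1)[of i] ldesc_bounded[of a b l]
      by (auto simp: mem_ldesc_Node split_beta)
  next
    case False
    then show ?thesis
      using Node.prems Node.IH(2)[of "i - nodes l - 1"] ldesc_bounded[of a b l]
        nodes_split_at[of "i - nodes l - 1" r]
      by (auto simp: mem_ldesc_Node split_beta)
  qed
qed simp

lemma ldesc_split_at_snd:
  "i \<le> nodes s \<Longrightarrow> (a, b) \<in> ldesc (snd (split_at s i)) \<longleftrightarrow> (a + i, b + i) \<in> ldesc s"
proof (induction s arbitrary: i a b)
  case (Node l r)
  show ?case
  proof (cases "i \<le> nodes l")
    case True
    then show ?thesis
      using Node.IH(1)[of i] nodes_split_at[of i l] ldesc_bounded[of "a + i" "b + i" l]
      by (auto simp: mem_ldesc_Node split_beta)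
  next
    case False
    then show ?thesis using Node.prems Node.IH(2)[of "i - nodes l - 1"] ldesc_bounded[of "a + i" "b + i" l]
      by (auto simp: mem_ldesc_Node split_beta)
  qed
qed simp

lemma tamari_step_ldesc: "tamari_step x y \<Longrightarrow> nodes y = nodes x \<and> ldesc y \<subset> ldesc x"
proof (induction rule: tamari_step.induct)
  case (rot a b c)
  have "ldesc (Node a (Node b c)) \<subseteq> ldesc (Node (Node a b) c)"
    by (auto simp: mem_ldesc_Node dest: ldesc_bounded)
  moreover have "(nodes a, Suc (nodes a + nodes b)) \<in> ldesc (Node (Node a b) c) - ldesc (Node a (Node b c))"
    by (auto simp: mem_ldesc_Node dest: ldesc_bounded)
  ultimately show ?case by auto
next
  case (left l l' r)
  then obtain a b where ab: "(a, b) \<in> ldesc l - ldesc l'" by auto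
  then have "b < nodes l" by (auto dest: ldesc_bounded)
  with ab left have "(a, b) \<in> ldesc (Node l r) - ldesc (Node l' r)"
    by (simp add: ldesc_Node_left)
  with left show ?case by (auto simp: ldesc.simps(2))
next
  case (right r r' l)
  then obtain a b where "(a, b) \<in> ldesc r - ldesc r'" by auto
  then have "(Suc (nodes l) + a, Suc (nodes l) + b) \<in> ldesc (Node l r) - ldesc (Node l r')"
    by (metis Diff_iff ldesc_Node_right)
  moreover have "ldesc (Node l r') \<subseteq> ldesc (Node l r)"
    using right by (auto simp: ldesc.simps(2) shift_pairs_def)
  ultimately show ?case using right by auto
qed

lemma tamari_le_ldesc: "tamari_le x y \<Longrightarrow> nodes y = nodes x \<and> (x = y \<or> ldesc y \<subset> ldesc x)"
  unfolding tamari_le_def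
  by (induction rule: rtranclp_induct) (auto dest: tamari_step_ldesc)

lemma tamari_le_refl [simp]: "tamari_le x x"
  by (simp add: tamari_le_def)

lemma tamari_le_trans: "tamari_le x y \<Longrightarrow> tamari_le y z \<Longrightarrow> tamari_le x z"
  unfolding tamari_le_def by simp

lemma tamari_le_antisym: "tamari_le x y \<Longrightarrow> tamari_le y x \<Longrightarrow> x = y"
  using tamari_le_ldesc by blast

lemma tamari_le_nodes: "tamari_le x y \<Longrightarrow> nodes y = nodes x"
  using tamari_le_ldesc by blast

lemma tamari_le_Node_left: "tamari_le l l' \<Longrightarrow> tamari_le (Node l r) (Node l' r)"
  unfolding tamari_le_def
  by (induction rule: rtranclp_induct) (auto intro: rtranclp.rtrancl_into_rtrancl tamari_step.left)

lemma tamari_le_Node_right: "tamari_le r r' \<Longrightarrow> tamari_le (Node l r) (Node l r')"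
  unfolding tamari_le_def
  by (induction rule: rtranclp_induct) (auto intro: rtranclp.rtrancl_into_rtrancl tamari_step.right)

lemma tamari_le_Node: "tamari_le l l' \<Longrightarrow> tamari_le r r' \<Longrightarrow> tamari_le (Node l r) (Node l' r')"
  by (meson tamari_le_Node_left tamari_le_Node_right tamari_le_trans)

lemma tamari_le_rotate: "tamari_le (Node (Node a b) c) (Node a (Node b c))"
  unfolding tamari_le_def using tamari_step.rot by blast

text \<open>Rotating node \<open>k\<close> up to the root is possible as soon as all nodes to its left lie
  in its left subtree.\<close>

lemma tamari_le_rotate_to_root:
  "k < nodes x \<Longrightarrow> (\<forall>i<k. (i, k) \<in> ldesc x) \<Longrightarrow>
   tamari_le x (Node (fst (split_at x k)) (snd (split_at x (Suc k))))"
proof (induction x arbitrary: k)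
  case (Node l r)
  consider "k = nodes l" | "k < nodes l" | "k > nodes l" by linarith
  then show ?case
  proof cases
    case 1
    then show ?thesis by (simp add: split_at_nodes split_at_0)
  next
    case 2
    with Node.prems have "\<forall>i<k. (i, k) \<in> ldesc l" by (simp add: ldesc_Node_left)
    with 2 have "tamari_le l (Node (fst (split_at l k)) (snd (split_at l (Suc k))))"
      using Node.IH(1) by blast
    then have "tamari_le (Node l r) (Node (Node (fst (split_at l k)) (snd (split_at l (Suc k)))) r)"
      by (rule tamari_le_Node_left)
    then show ?thesis using 2 tamari_le_rotate tamari_le_trans by (simp add: split_beta)
  next
    case 3
    with Node.prems have "(nodes l, k) \<in> ldesc (Node l r)" by auto
    then show ?thesis using ldesc_Node_root by blast
  qed
qed simp

theorem tamari_le_iff_ldesc: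
  assumes "nodes x = nodes y"
  shows "tamari_le x y \<longleftrightarrow> ldesc y \<subseteq> ldesc x"
proof
  show "tamari_le x y \<Longrightarrow> ldesc y \<subseteq> ldesc x"
    using tamari_le_ldesc by blast
next
  show "ldesc y \<subseteq> ldesc x \<Longrightarrow> tamari_le x y"
    using assms
  proof (induction y arbitrary: x)
    case Leaf
    then show ?case by (cases x) auto
  next
    case (Node l' r')
    let ?k = "nodes l'"
    let ?a = "fst (split_at x ?k)" and ?b = "snd (split_at x (Suc ?k))"
    have k: "?k < nodes x" using Node.prems by simp
    \<comment> \<open>all nodes left of the root of \<open>y\<close> lie below it on the left in \<open>y\<close>, hence in \<open>x\<close>\<close>
    have "\<forall>i<?k. (i, ?k) \<in> ldesc x" using Node.prems by (auto simp: mem_ldesc_Node)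
    with k have root: "tamari_le x (Node ?a ?b)"
      by (rule tamari_le_rotate_to_root)
    have "ldesc l' \<subseteq> ldesc ?a"
    proof
      fix p assume p: "p \<in> ldesc l'"
      then have "p \<in> ldesc x" using Node.prems(1) by (auto simp: ldesc.simps(2))
      moreover have "snd p < ?k" using p ldesc_bounded by (cases p) auto
      ultimately show "p \<in> ldesc ?a" using k by (cases p) (simp add: ldesc_split_at_fst)
    qed
    moreover have "nodes ?a = nodes l'" using nodes_split_at[of ?k x] k by simp
    ultimately have left: "tamari_le ?a l'" using Node.IH(1) by simp
    have "ldesc r' \<subseteq> ldesc ?b"
    proof
      fix p assume "p \<in> ldesc r'"
      then have "(fst p + Suc ?k, snd p + Suc ?k) \<in> ldesc (Node l' r')"
        using ldesc_Node_right[of l' "fst p" "snd p" r'] by (simp add: add.commute)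
      then show "p \<in> ldesc ?b" using Node.prems k by (cases p) (auto simp: ldesc_split_at_snd)
    qed
    moreover have "nodes ?b = nodes r'" using nodes_split_at[of "Suc ?k" x] k Node.prems by simp
    ultimately have right: "tamari_le ?b r'" using Node.IH(2) by simp
    show ?case using root tamari_le_Node[OF left right] tamari_le_trans by blast
  qed
qed

section \<open>Non-inversions and the maps lambda and gamma\<close>

definition noninv :: "nat list \<Rightarrow> (nat \<times> nat) set" where
  "noninv v = {(i, j). i < j \<and> j < length v \<and> v ! i < v ! j}"

definition interval_kernel :: "(nat \<times> nat) set \<Rightarrow> nat \<Rightarrow> (nat \<times> nat) set" where
  "interval_kernel N n = {(i, j). i < j \<and> j < n \<and> (\<forall>k. i \<le> k \<and> k < j \<longrightarrow> (k, j) \<in> N)}"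

lemma interval_kernel_subset: "interval_kernel N n \<subseteq> N"
  unfolding interval_kernel_def by auto

lemma interval_kernel_eq_self:
  assumes "\<And>i j. (i, j) \<in> N \<Longrightarrow> i < j \<and> j < n"
    and "\<And>i j k. (i, j) \<in> N \<Longrightarrow> i \<le> k \<Longrightarrow> k < j \<Longrightarrow> (k, j) \<in> N"
  shows "interval_kernel N n = N"
  using assms unfolding interval_kernel_def by blast

lemma ldesc_subset_interval_kernel_iff:
  "ldesc t \<subseteq> interval_kernel N (nodes t) \<longleftrightarrow> ldesc t \<subseteq> N"
proof
  assume "ldesc t \<subseteq> N"
  then show "ldesc t \<subseteq> interval_kernel N (nodes t)"
    by (clarsimp simp: interval_kernel_def) (meson ldesc_bounded ldesc_left_closed subsetD)
qed (use interval_kernel_subset in blast)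

lemma interval_kernel_ldesc: "interval_kernel (ldesc t) (nodes t) = ldesc t"
  by (rule interval_kernel_eq_self[OF ldesc_bounded ldesc_left_closed])

text \<open>If position \<open>L\<close> dominates everything to its left and nothing to its right, the
  kernel decomposes like \<^const>\<open>ldesc\<close> of a tree whose root is node \<open>L\<close>.\<close>

lemma interval_kernel_pivot:
  assumes "L < n"
    and low: "\<And>k j. k < j \<Longrightarrow> j < L \<Longrightarrow> (k, j) \<in> N \<longleftrightarrow> (k, j) \<in> N1"
    and pivot_in: "\<And>k. k < L \<Longrightarrow> (k, L) \<in> N"
    and pivot_out: "\<And>j. L < j \<Longrightarrow> j < n \<Longrightarrow> (L, j) \<notin> N"
    and high: "\<And>k j. L < k \<Longrightarrow> k < j \<Longrightarrow> j < n \<Longrightarrow>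
      (k, j) \<in> N \<longleftrightarrow> (k - Suc L, j - Suc L) \<in> N2"
  shows "interval_kernel N n =
    interval_kernel N1 L \<union> {(i, L) | i. i < L} \<union> shift_pairs (Suc L) (interval_kernel N2 (n - Suc L))"
proof (rule set_eqI, clarify)
  fix i j
  let ?pivot = "{(i, L) | i. i < L}" and ?high = "shift_pairs (Suc L) (interval_kernel N2 (n - Suc L))"
  consider "j < L" | "j = L" | "L < j" "i \<le> L" | "L < i" "i < j" | "j \<le> i" by linarith
  then show "(i, j) \<in> interval_kernel N n \<longleftrightarrow> (i, j) \<in> interval_kernel N1 L \<union> ?pivot \<union> ?high"
  proof cases
    case 1
    then have "(k, j) \<in> N \<longleftrightarrow> (k, j) \<in> N1" if "k < j" for k
      using low that by blast
    then have "(i, j) \<in> interval_kernel N n \<longleftrightarrow> (i, j) \<in> interval_kernel N1 L"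
      using 1 \<open>L < n\<close> unfolding interval_kernel_def by auto
    moreover have "(i, j) \<notin> ?pivot \<union> ?high" using 1 by (auto simp: mem_shift_pairs)
    ultimately show ?thesis by blast
  next
    case 2
    then have "(i, j) \<in> interval_kernel N n \<longleftrightarrow> i < L"
      using pivot_in \<open>L < n\<close> unfolding interval_kernel_def by auto
    moreover have "(i, j) \<notin> interval_kernel N1 L \<union> ?high"
      using 2 by (auto simp: interval_kernel_def mem_shift_pairs)
    ultimately show ?thesis using 2 by blast
  next
    case 3
    then have "(i, j) \<notin> interval_kernel N n"
      using pivot_out unfolding interval_kernel_def by blast
    moreover have "(i, j) \<notin> interval_kernel N1 L \<union> ?pivot \<union> ?high"
      using 3 by (auto simp: interval_kernel_def mem_shift_pairs)
    ultimately show ?thesis by blast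
  next
    case 4
    have "(\<forall>k. i \<le> k \<and> k < j \<longrightarrow> (k, j) \<in> N) \<longleftrightarrow>
      (\<forall>k. i - Suc L \<le> k \<and> k < j - Suc L \<longrightarrow> (k, j - Suc L) \<in> N2)" if "j < n"
    proof (intro iffI allI impI)
      fix k
      assume all: "\<forall>k. i \<le> k \<and> k < j \<longrightarrow> (k, j) \<in> N" and k: "i - Suc L \<le> k \<and> k < j - Suc L"
      then have "i \<le> k + Suc L" "k + Suc L < j" using 4 by auto
      with all have "(k + Suc L, j) \<in> N" by blast
      then show "(k, j - Suc L) \<in> N2"
        using high[of "k + Suc L" j] \<open>k + Suc L < j\<close> that by simp
    next
      fix k
      assume all: "\<forall>k. i - Suc L \<le> k \<and> k < j - Suc L \<longrightarrow> (k, j - Suc L) \<in> N2"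
        and k: "i \<le> k \<and> k < j"
      then have "i - Suc L \<le> k - Suc L" "k - Suc L < j - Suc L" using 4 by auto
      with all have "(k - Suc L, j - Suc L) \<in> N2" by blast
      then show "(k, j) \<in> N" using high[of k j] 4 k that by simp
    qed
    with 4 show ?thesis by (auto simp: interval_kernel_def mem_shift_pairs)
  next
    case 5
    then show ?thesis by (auto simp: interval_kernel_def mem_shift_pairs)
  qed
qed

lemma nth_st: "i < length xs \<Longrightarrow> st xs ! i = card {y \<in> set xs. y \<le> xs ! i}"
  by (simp add: st_def)

lemma st_less_iff:
  assumes "i < length xs" "j < length xs"
  shows "st xs ! i < st xs ! j \<longleftrightarrow> xs ! i < xs ! j"
proof
  assume less: "xs ! i < xs ! j"
  then have "xs ! j \<notin> {y \<in> set xs. y \<le> xs ! i}" by auto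
  moreover have "xs ! j \<in> {y \<in> set xs. y \<le> xs ! j}" using assms by auto
  moreover have "{y \<in> set xs. y \<le> xs ! i} \<subseteq> {y \<in> set xs. y \<le> xs ! j}" using less by auto
  ultimately have "{y \<in> set xs. y \<le> xs ! i} \<subset> {y \<in> set xs. y \<le> xs ! j}" by blast
  then show "st xs ! i < st xs ! j"
    using assms by (simp add: nth_st psubset_card_mono)
next
  assume "st xs ! i < st xs ! j"
  moreover have "st xs ! j \<le> st xs ! i" if "\<not> xs ! i < xs ! j"
  proof -
    have "{y \<in> set xs. y \<le> xs ! j} \<subseteq> {y \<in> set xs. y \<le> xs ! i}"
      using that by auto
    then show ?thesis using assms by (simp add: nth_st card_mono)
  qed
  ultimately show "xs ! i < xs ! j" by linarith
qed

lemma distinct_st: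
  assumes "distinct xs"
  shows "distinct (st xs)"
  unfolding distinct_conv_nth
proof (intro allI impI)
  fix i j assume ij: "i < length (st xs)" "j < length (st xs)" "i \<noteq> j"
  then have "xs ! i \<noteq> xs ! j" using assms by (simp add: nth_eq_iff_index_eq)
  with ij show "st xs ! i \<noteq> st xs ! j"
    using st_less_iff[of i xs j] st_less_iff[of j xs i] by auto
qed

lemma noninv_st [simp]: "noninv (st xs) = noninv xs"
  unfolding noninv_def using st_less_iff by auto

lemma lam_split_at_max:
  assumes "distinct v" "j < length v" "v ! j = Max (set v)"
  shows "lam v = Node (lam (st (take j v))) (lam (st (drop (Suc j) v)))"
proof -
  obtain x xs where v: "v = x # xs" using assms(2) by (cases v) auto
  have "v ! i \<noteq> Max (set v)" if "i < j" for i
    using that assms by (metis less_trans nat_neq_iff nth_eq_iff_index_eq)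
  then have tw: "takeWhile (\<lambda>y. y \<noteq> Max (set v)) v = take j v"
    by (intro takeWhile_eq_take_P_nth) (use assms in auto)
  then have "dropWhile (\<lambda>y. y \<noteq> Max (set v)) v = drop j v"
    using assms(2) by (simp add: dropWhile_eq_drop[of _ v] min_def)
  then show ?thesis using tw v by (simp add: drop_Suc tl_drop)
qed

lemma lam_nodes_ldesc:
  "distinct v \<Longrightarrow> nodes (lam v) = length v \<and> ldesc (lam v) = interval_kernel (noninv v) (length v)"
proof (induction "length v" arbitrary: v rule: less_induct)
  case less
  show ?case
  proof (cases "v = []")
    case True
    then show ?thesis by (simp add: interval_kernel_def)
  next
    case False
    then obtain j where j: "j < length v" and max: "v ! j = Max (set v)"
      by (metis List.finite_set Max_in in_set_conv_nth set_empty)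
    have dominant: "v ! k < v ! j" if "k < length v" "k \<noteq> j" for k
    proof -
      have "v ! k \<le> Max (set v)" using that by simp
      moreover have "v ! k \<noteq> v ! j" using that j less.prems by (simp add: nth_eq_iff_index_eq)
      ultimately show ?thesis using max by simp
    qed
    have IH1: "nodes (lam (st (take j v))) = j \<and>
        ldesc (lam (st (take j v))) = interval_kernel (noninv (take j v)) j"
      using less.hyps[of "st (take j v)"] less.prems j by (simp add: distinct_st)
    have IH2: "nodes (lam (st (drop (Suc j) v))) = length v - Suc j \<and>
        ldesc (lam (st (drop (Suc j) v))) = interval_kernel (noninv (drop (Suc j) v)) (length v - Suc j)"
      using less.hyps[of "st (drop (Suc j) v)"] less.prems j by (simp add: distinct_st)
    have "interval_kernel (noninv v) (length v) =
        interval_kernel (noninv (take j v)) j \<union> {(i, j) | i. i < j} \<union>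
        shift_pairs (Suc j) (interval_kernel (noninv (drop (Suc j) v)) (length v - Suc j))"
      by (rule interval_kernel_pivot) (use j dominant in \<open>auto simp: noninv_def dest: dominant\<close>)
    then show ?thesis
      using lam_split_at_max[OF less.prems j max] IH1 IH2 j by (simp add: ldesc.simps(2))
  qed
qed

lemma nodes_lam: "distinct v \<Longrightarrow> nodes (lam v) = length v"
  using lam_nodes_ldesc by blast

lemma ldesc_lam: "distinct v \<Longrightarrow> ldesc (lam v) = interval_kernel (noninv v) (length v)"
  using lam_nodes_ldesc by blast

lemma lam_le_iff:
  "distinct v \<Longrightarrow> length v = nodes r \<Longrightarrow> tamari_le (lam v) r \<longleftrightarrow> ldesc r \<subseteq> noninv v"
  by (simp add: tamari_le_iff_ldesc nodes_lam ldesc_lam ldesc_subset_interval_kernel_iff)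

lemma nth_perm_vee:
  "k < length \<sigma> \<Longrightarrow> perm_vee \<sigma> \<tau> ! k = \<sigma> ! k + length \<tau>"
  "perm_vee \<sigma> \<tau> ! length \<sigma> = length \<sigma> + length \<tau> + 1"
  "length \<sigma> < k \<Longrightarrow> perm_vee \<sigma> \<tau> ! k = \<tau> ! (k - Suc (length \<sigma>))"
  by (auto simp: perm_vee_def nth_append)

lemma length_perm_vee [simp]: "length (perm_vee \<sigma> \<tau>) = length \<sigma> + length \<tau> + 1"
  by (simp add: perm_vee_def)

lemma noninv_perm_vee:
  assumes \<sigma>: "set \<sigma> \<subseteq> {1..length \<sigma>}" and \<tau>: "set \<tau> \<subseteq> {1..length \<tau>}"
  shows "noninv (perm_vee \<sigma> \<tau>) =
    noninv \<sigma> \<union> {(i, length \<sigma>) | i. i < length \<sigma>} \<union> shift_pairs (Suc (length \<sigma>)) (noninv \<tau>)"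
proof (rule set_eqI, clarify)
  fix i j
  let ?p = "length \<sigma>" and ?q = "length \<tau>"
  have \<sigma>_bounds: "1 \<le> \<sigma> ! k \<and> \<sigma> ! k \<le> ?p" if "k < ?p" for k
    using \<sigma> nth_mem[OF that] by auto
  have \<tau>_bounds: "1 \<le> \<tau> ! k \<and> \<tau> ! k \<le> ?q" if "k < ?q" for k
    using \<tau> nth_mem[OF that] by auto
  consider "j < ?p" | "j = ?p" | "?p < j \<and> i \<le> ?p" | "?p < i" by linarith
  then show "(i, j) \<in> noninv (perm_vee \<sigma> \<tau>) \<longleftrightarrow>
    (i, j) \<in> noninv \<sigma> \<union> {(i, ?p) | i. i < ?p} \<union> shift_pairs (Suc ?p) (noninv \<tau>)"
  proof cases
    case 1
    then show ?thesis by (auto simp: noninv_def nth_perm_vee mem_shift_pairs)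
  next
    case 2
    then show ?thesis using \<sigma>_bounds[of i] by (auto simp: noninv_def nth_perm_vee mem_shift_pairs)
  next
    case 3
    have "\<not> perm_vee \<sigma> \<tau> ! i < perm_vee \<sigma> \<tau> ! j" if "j < ?p + ?q + 1"
    proof -
      have "\<tau> ! (j - Suc ?p) \<le> ?q" using \<tau>_bounds[of "j - Suc ?p"] 3 that by auto
      moreover have "?q < perm_vee \<sigma> \<tau> ! i"
        using 3 \<sigma>_bounds[of i] by (cases "i = ?p") (auto simp: nth_perm_vee)
      ultimately show ?thesis using 3 by (simp add: nth_perm_vee)
    qed
    then show ?thesis using 3 by (auto simp: noninv_def mem_shift_pairs)
  next
    case 4
    then show ?thesis by (auto simp: noninv_def nth_perm_vee mem_shift_pairs)
  qed
qed

lemma length_set_gam: "length (gam t) = nodes t \<and> set (gam t) = {1..nodes t}"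
proof (induction t)
  case (Node l r)
  have "(\<lambda>x. x + nodes r) ` {1..nodes l} = {nodes r + 1..nodes r + nodes l}"
    by (simp add: image_add_atLeastAtMost' add.commute)
  with Node show ?case by (auto simp: perm_vee_def)
qed simp

lemma distinct_gam: "distinct (gam t)"
  using length_set_gam[of t] by (intro card_distinct) simp

lemma noninv_gam: "noninv (gam t) = ldesc t"
proof (induction t)
  case Leaf
  then show ?case by (simp add: noninv_def)
next
  case (Node l r)
  then show ?case by (simp add: noninv_perm_vee length_set_gam ldesc.simps(2))
qed

section \<open>Restrictions and the permutations pi_R\<close>

definition rank :: "nat set \<Rightarrow> nat \<Rightarrow> nat" where
  "rank S x = card {y \<in> S. y < x}"

lemma rank_nth_sorted_list_of_set:
  assumes "finite S" "a < card S"
  shows "rank S (sorted_list_of_set S ! a) = a"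
proof -
  let ?xs = "sorted_list_of_set S"
  have sorted: "sorted_wrt (<) ?xs" and a: "a < length ?xs"
    using assms by auto
  have "{y \<in> S. y < ?xs ! a} = set (take a ?xs)"
  proof (intro set_eqI iffI)
    fix y assume y: "y \<in> {y \<in> S. y < ?xs ! a}"
    then have "y \<in> set ?xs" using assms(1) by simp
    then obtain k where k: "k < length ?xs" "?xs ! k = y" "y < ?xs ! a"
      using y by (auto simp: in_set_conv_nth)
    then have "k < a" using sorted_wrt_nth_less[OF sorted, of a k] a by (metis not_less_iff_gr_or_eq)
    with k show "y \<in> set (take a ?xs)" by (auto simp: in_set_conv_nth)
  next
    fix y assume "y \<in> set (take a ?xs)"
    then obtain k where "k < a" "?xs ! k = y" using a by (auto simp: in_set_conv_nth)
    then show "y \<in> {y \<in> S. y < ?xs ! a}"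
      using sorted_wrt_nth_less[OF sorted, of k a] a assms(1) nth_mem[of k ?xs] by auto
  qed
  then show ?thesis using a sorted by (simp add: rank_def distinct_card strict_sorted_iff)
qed

lemma rank_less_card:
  assumes "finite S" "x \<in> S"
  shows "rank S x < card S" and "sorted_list_of_set S ! rank S x = x"
proof -
  obtain a where "a < card S" "sorted_list_of_set S ! a = x"
    using assms by (metis in_set_conv_nth length_sorted_list_of_set set_sorted_list_of_set)
  then show "rank S x < card S" "sorted_list_of_set S ! rank S x = x"
    using rank_nth_sorted_list_of_set[OF assms(1)] by auto
qed

lemma rank_le_card: "finite S \<Longrightarrow> rank S x \<le> card S"
  unfolding rank_def by (intro card_mono) auto

lemma rank_strict_mono:
  assumes "finite S" "x \<in> S" "x < y"
  shows "rank S x < rank S y"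
  unfolding rank_def
  by (rule psubset_card_mono) (use assms in auto)

lemma nth_sorted_list_of_set_strict_mono:
  "finite S \<Longrightarrow> a < b \<Longrightarrow> b < card S \<Longrightarrow> sorted_list_of_set S ! a < sorted_list_of_set S ! b"
  using sorted_wrt_nth_less[OF strict_sorted_list_of_set, of a b S] by simp

lemma tree_restr_nodes_ldesc:
  assumes R: "R \<subseteq> {1..nodes r}"
  shows "nodes (tree_restr r R) = card R \<and>
    ldesc (tree_restr r R) = {(rank R x, rank R y) | x y. x \<in> R \<and> y \<in> R \<and> (x - 1, y - 1) \<in> ldesc r}"
proof -
  let ?xs = "sorted_list_of_set R" and ?g = "gam r"
  let ?v = "map (\<lambda>i. ?g ! (i - 1)) ?xs"
  let ?N = "{(a, b). a < b \<and> b < card R \<and> (?xs ! a - 1, ?xs ! b - 1) \<in> ldesc r}"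
  have fin: "finite R" using R finite_subset by blast
  have in_R: "?xs ! a \<in> R" if "a < card R" for a
    using fin that nth_mem[of a ?xs] by simp
  have pos: "1 \<le> ?xs ! a \<and> ?xs ! a \<le> nodes r" if "a < card R" for a
    using in_R[OF that] R by auto
  have gam: "length ?g = nodes r" "distinct ?g" "noninv ?g = ldesc r"
    by (simp_all add: length_set_gam distinct_gam noninv_gam)
  have "inj_on (\<lambda>i. ?g ! (i - 1)) R"
  proof (rule inj_onI)
    fix x y assume xy: "x \<in> R" "y \<in> R" "?g ! (x - 1) = ?g ! (y - 1)"
    have x: "x \<in> {1..nodes r}" and y: "y \<in> {1..nodes r}" using xy(1,2) R by auto
    then have "x - 1 < length ?g" "y - 1 < length ?g" using gam(1) by auto
    then have "x - 1 = y - 1" using xy(3) gam(2) nth_eq_iff_index_eq by blast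
    then show "x = y" using x y by auto
  qed
  then have distinct: "distinct ?v" using fin by (simp add: distinct_map)
  have noninv: "noninv ?v = ?N"
  proof (intro set_eqI, clarify)
    fix a b
    show "(a, b) \<in> noninv ?v \<longleftrightarrow> (a, b) \<in> ?N"
    proof (cases "a < b \<and> b < card R")
      case True
      then have "?xs ! a - 1 < ?xs ! b - 1" "?xs ! b - 1 < length ?g"
        using pos[of a] pos[of b] nth_sorted_list_of_set_strict_mono[OF fin, of a b] gam(1) by auto
      with True show ?thesis using gam(3) by (auto simp: noninv_def)
    qed (auto simp: noninv_def)
  qed
  have kernel: "interval_kernel ?N (card R) = ?N"
  proof (rule interval_kernel_eq_self)
    fix i j k assume ij: "(i, j) \<in> ?N" and k: "i \<le> k" "k < j"
    have "?xs ! i \<le> ?xs ! k" "?xs ! k < ?xs ! j"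
      using nth_sorted_list_of_set_strict_mono[OF fin] ij k by (auto simp: order_le_less)
    then have "(?xs ! k - 1, ?xs ! j - 1) \<in> ldesc r"
      using ij k pos[of i] pos[of k] by (auto intro: ldesc_left_closed)
    then show "(k, j) \<in> ?N" using ij k by auto
  qed auto
  have image: "?N = {(rank R x, rank R y) | x y. x \<in> R \<and> y \<in> R \<and> (x - 1, y - 1) \<in> ldesc r}"
  proof (intro set_eqI iffI)
    fix p assume "p \<in> ?N"
    then obtain a b where ab: "p = (a, b)" "a < b" "b < card R" "(?xs ! a - 1, ?xs ! b - 1) \<in> ldesc r"
      by auto
    then have "p = (rank R (?xs ! a), rank R (?xs ! b))" "?xs ! a \<in> R" "?xs ! b \<in> R"
      using in_R rank_nth_sorted_list_of_set[OF fin] by auto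
    with ab(4) show "p \<in> {(rank R x, rank R y) | x y. x \<in> R \<and> y \<in> R \<and> (x - 1, y - 1) \<in> ldesc r}"
      by blast
  next
    fix p assume "p \<in> {(rank R x, rank R y) | x y. x \<in> R \<and> y \<in> R \<and> (x - 1, y - 1) \<in> ldesc r}"
    then obtain x y where p: "p = (rank R x, rank R y)" "x \<in> R" "y \<in> R" "(x - 1, y - 1) \<in> ldesc r"
      by auto
    have "x - 1 < y - 1" using ldesc_bounded[OF p(4)] by simp
    then have "x < y" by arith
    then show "p \<in> ?N"
      using p rank_less_card[OF fin] rank_strict_mono[OF fin] by auto
  qed
  have "tree_restr r R = lam (st ?v)" by (simp add: tree_restr_def perm_restr_def)
  then show ?thesis
    using lam_nodes_ldesc[of "st ?v"] distinct_st[OF distinct] noninv kernel image by simp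
qed

lemma nodes_tree_restr: "R \<subseteq> {1..nodes r} \<Longrightarrow> nodes (tree_restr r R) = card R"
  using tree_restr_nodes_ldesc by blast

lemma le_tree_restr_iff:
  assumes "R \<subseteq> {1..nodes r}" "nodes s = card R"
  shows "tamari_le s (tree_restr r R) \<longleftrightarrow>
    (\<forall>x\<in>R. \<forall>y\<in>R. (x - 1, y - 1) \<in> ldesc r \<longrightarrow> (rank R x, rank R y) \<in> ldesc s)"
  using tree_restr_nodes_ldesc[OF assms(1)] assms(2) by (auto simp: tamari_le_iff_ldesc)

lemma nth_perm_inv:
  assumes "distinct w" "i < length w" "w ! i = Suc k" "k < length w"
  shows "perm_inv w ! k = Suc i"
proof -
  have "(LEAST i. i < length w \<and> w ! i = Suc k) = i"
    by (rule Least_equality) (use assms in auto, metis assms(1-3) nth_eq_iff_index_eq order_refl)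
  then show ?thesis using assms(4) by (simp add: perm_inv_def del: upt_Suc)
qed

lemma length_perm_inv [simp]: "length (perm_inv w) = length w"
  by (simp add: perm_inv_def del: upt_Suc)

lemma piR_noninv:
  assumes R: "R \<subseteq> {1..n}"
  shows "length (piR n R) = n \<and> distinct (piR n R) \<and>
    noninv (piR n R) = {(i, j). i < j \<and> j < n \<and> (Suc i \<in> R \<or> Suc j \<notin> R)}"
proof -
  define C where "C = {1..n} - R"
  define w where "w = sorted_list_of_set R @ sorted_list_of_set C"
  define pos where "pos x = (if x \<in> R then rank R x else card R + rank C x)" for x
  have fin: "finite R" "finite C" using R finite_subset by (auto simp: C_def)
  have "card R + card C = n"
    using R fin card_Diff_subset[of R "{1..n}"] card_mono[of "{1..n}" R] by (simp add: C_def)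
  then have len: "length w = n" by (simp add: w_def)
  have "distinct w" using fin by (auto simp: w_def C_def)
  have w_pos: "pos x < n \<and> w ! pos x = x" if "x \<in> {1..n}" for x
    using that rank_less_card[of R x] rank_less_card[of C x] fin \<open>card R + card C = n\<close>
    by (auto simp: pos_def w_def C_def nth_append)
  have nth: "piR n R ! k = Suc (pos (Suc k))" if "k < n" for k
    using nth_perm_inv[OF \<open>distinct w\<close>, of "pos (Suc k)" k] w_pos[of "Suc k"] that len
    by (simp add: piR_def w_def C_def)
  have length: "length (piR n R) = n" using len by (simp add: piR_def w_def C_def)
  have pos_less: "pos x < pos y \<longleftrightarrow> x \<in> R \<or> y \<notin> R" if "x < y" "x \<in> {1..n}" "y \<in> {1..n}" for x y
    using that fin rank_strict_mono[of R x y] rank_strict_mono[of C x y] rank_less_card(1)[of R x]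
      rank_le_card[of R y] by (auto simp: pos_def C_def)
  have "distinct (piR n R)"
    unfolding distinct_conv_nth
  proof (intro allI impI)
    fix i j assume "i < length (piR n R)" "j < length (piR n R)" "i \<noteq> j"
    then show "piR n R ! i \<noteq> piR n R ! j"
      using nth w_pos[of "Suc i"] w_pos[of "Suc j"] length by (metis Suc_inject atLeastAtMost_iff le_add1 less_eq_Suc_le plus_1_eq_Suc)
  qed
  moreover have "noninv (piR n R) = {(i, j). i < j \<and> j < n \<and> (Suc i \<in> R \<or> Suc j \<notin> R)}"
    using nth pos_less length by (auto simp: noninv_def)
  ultimately show ?thesis using length by blast
qed

lemma piR_le_iff:
  assumes "R \<subseteq> {1..n}" "nodes r = n"
  shows "tamari_le (lam (piR n R)) r \<longleftrightarrow> (\<forall>(i, j)\<in>ldesc r. Suc i \<in> R \<or> Suc j \<notin> R)"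
  using piR_noninv[OF assms(1)] assms(2) lam_le_iff[of "piR n R" r] ldesc_bounded[of _ _ r] by auto

section \<open>The Moebius function and the M basis\<close>

lemma finite_Ytrees: "finite (Ytrees n)"
proof (induction n rule: less_induct)
  case (less n)
  show ?case
  proof (cases n)
    case 0
    then have "Ytrees n = {Leaf}" by (auto simp: Ytrees_def elim: nodes.elims)
    then show ?thesis by simp
  next
    case (Suc m)
    have "Ytrees n \<subseteq> (\<lambda>(l, r). Node l r) ` (\<Union>k\<le>m. Ytrees k \<times> Ytrees (m - k))"
    proof
      fix t assume "t \<in> Ytrees n"
      then obtain l r where "t = Node l r" "nodes l + nodes r = m"
        using Suc by (cases t) (auto simp: Ytrees_def)
      then show "t \<in> (\<lambda>(l, r). Node l r) ` (\<Union>k\<le>m. Ytrees k \<times> Ytrees (m - k))"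
        by (auto simp: Ytrees_def image_iff intro!: bexI[of _ "nodes l"])
    qed
    moreover have "finite (\<Union>k\<le>m. Ytrees k \<times> Ytrees (m - k))"
      using less Suc by auto
    ultimately show ?thesis by (meson finite_imageI finite_subset)
  qed
qed

lemma tamari_le_in_Ytrees: "tamari_le u t \<or> tamari_le t u \<Longrightarrow> u \<in> Ytrees (nodes t)"
  using tamari_le_nodes by (auto simp: Ytrees_def)

lemma finite_tamari_below [simp]: "finite {u. tamari_le u t}"
  by (rule finite_subset[OF _ finite_Ytrees[of "nodes t"]]) (auto intro: tamari_le_in_Ytrees)

lemma finite_tamari_above [simp]: "finite {u. tamari_le t u}"
  by (rule finite_subset[OF _ finite_Ytrees[of "nodes t"]]) (auto intro: tamari_le_in_Ytrees)

definition tamari_height :: "tree \<Rightarrow> nat" where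
  "tamari_height s = nodes s * nodes s - card (ldesc s)"

lemma tamari_height_less: "tamari_le u s \<Longrightarrow> u \<noteq> s \<Longrightarrow> tamari_height u < tamari_height s"
proof -
  assume "tamari_le u s" "u \<noteq> s"
  then have "nodes s = nodes u" "ldesc s \<subset> ldesc u" using tamari_le_ldesc by blast+
  moreover have "card (ldesc s) < card (ldesc u)"
    using calculation(2) finite_ldesc psubset_card_mono by blast
  moreover have "card (ldesc u) \<le> card ({..<nodes u} \<times> {..<nodes u})"
    by (intro card_mono) (auto dest: ldesc_bounded)
  then have "card (ldesc u) \<le> nodes u * nodes u" by (simp add: card_cartesian_product)
  ultimately show ?thesis by (simp add: tamari_height_def)
qed

function mobius :: "tree \<Rightarrow> tree \<Rightarrow> int" where
  "mobius t s = (if \<not> tamari_le t s then 0 else if t = s then 1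
      else - (\<Sum>u | tamari_le t u \<and> tamari_le u s \<and> u \<noteq> s. mobius t u))"
  by auto
termination
  by (relation "measure (\<lambda>(t, s). tamari_height s)") (auto intro: tamari_height_less)

declare mobius.simps [simp del]

lemma mobius_eq_0: "\<not> tamari_le t s \<Longrightarrow> mobius t s = 0"
  by (simp add: mobius.simps)

lemma tamari_interval_remove_top:
  "tamari_le t s \<Longrightarrow>
    {u. tamari_le t u \<and> tamari_le u s} = insert s {u. tamari_le t u \<and> tamari_le u s \<and> u \<noteq> s}"
  by auto

lemma sum_mobius_interval:
  assumes "tamari_le t s"
  shows "(\<Sum>u | tamari_le t u \<and> tamari_le u s. mobius t u) = (if t = s then 1 else 0)"
proof (cases "t = s")
  case True
  then have "{u. tamari_le t u \<and> tamari_le u s} = {s}" using tamari_le_antisym by auto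
  with True show ?thesis by (simp add: mobius.simps)
next
  case False
  with assms show ?thesis
    by (simp add: tamari_interval_remove_top mobius.simps[of t s])
qed

lemma tamari_mobius_eq_mobius: "tamari_mobius = mobius"
  unfolding tamari_mobius_def
proof (rule the_equality)
  show "(\<forall>t s. \<not> tamari_le t s \<longrightarrow> mobius t s = 0) \<and>
    (\<forall>t s. tamari_le t s \<longrightarrow> (\<Sum>u | tamari_le t u \<and> tamari_le u s. mobius t u) = (if t = s then 1 else 0))"
    using mobius_eq_0 sum_mobius_interval by blast
next
  fix \<mu> :: "tree \<Rightarrow> tree \<Rightarrow> int"
  assume \<mu>: "(\<forall>t s. \<not> tamari_le t s \<longrightarrow> \<mu> t s = 0) \<and>
    (\<forall>t s. tamari_le t s \<longrightarrow> (\<Sum>u | tamari_le t u \<and> tamari_le u s. \<mu> t u) = (if t = s then 1 else 0))"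
  have "\<mu> t s = mobius t s" for t s
  proof (induction "tamari_height s" arbitrary: s rule: less_induct)
    case less
    show ?case
    proof (cases "tamari_le t s")
      case True
      let ?below = "{u. tamari_le t u \<and> tamari_le u s \<and> u \<noteq> s}"
      have fin: "finite ?below" by simp
      have "\<mu> t s + (\<Sum>u\<in>?below. \<mu> t u) = mobius t s + (\<Sum>u\<in>?below. mobius t u)"
        using \<mu> sum_mobius_interval[OF True] True fin by (simp add: tamari_interval_remove_top)
      moreover have "(\<Sum>u\<in>?below. \<mu> t u) = (\<Sum>u\<in>?below. mobius t u)"
        using less tamari_height_less by (intro sum.cong) auto
      ultimately show ?thesis by simp
    qed (use \<mu> mobius_eq_0 in simp)
  qed
  then show "\<mu> = mobius" by (intro ext)
qed

lemma tamari_mobius_eq_0: "\<not> tamari_le t s \<Longrightarrow> tamari_mobius t s = 0"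
  by (simp add: tamari_mobius_eq_mobius mobius.simps)

lemma tamari_mobius_nonzero: "tamari_mobius t s \<noteq> 0 \<Longrightarrow> tamari_le t s"
  using tamari_mobius_eq_0 by blast

lemma tamari_mobius_refl: "tamari_mobius t t = 1"
  by (simp add: tamari_mobius_eq_mobius mobius.simps)

lemma sum_tamari_mobius_below:
  "(\<Sum>u | tamari_le u s. tamari_mobius t u) = (if t = s then 1 else 0)"
proof -
  have "(\<Sum>u | tamari_le u s. tamari_mobius t u) = (\<Sum>u | tamari_le t u \<and> tamari_le u s. tamari_mobius t u)"
    by (rule sum.mono_neutral_right) (auto dest: tamari_mobius_nonzero)
  also have "\<dots> = (if t = s then 1 else 0)"
  proof (cases "tamari_le t s")
    case False
    then have empty: "{u. tamari_le t u \<and> tamari_le u s} = {}" using tamari_le_trans by blast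
    show ?thesis unfolding empty using False by auto
  qed (simp add: tamari_mobius_eq_mobius sum_mobius_interval)
  finally show ?thesis .
qed

lemma sum_Mvec_of_bool_below:
  "(\<Sum>s'\<in>Ytrees (nodes s). Mvec s s' * of_bool (tamari_le s' X)) = of_bool (s = X)"
proof -
  have "(\<Sum>s'\<in>Ytrees (nodes s). Mvec s s' * of_bool (tamari_le s' X)) = (\<Sum>s' | tamari_le s' X. Mvec s s')"
    by (rule sum.mono_neutral_cong)
      (auto simp: finite_Ytrees Mvec_def dest: tamari_mobius_nonzero intro: tamari_le_in_Ytrees)
  also have "\<dots> = of_int (\<Sum>s' | tamari_le s' X. tamari_mobius s s')"
    by (simp add: Mvec_def)
  finally show ?thesis by (simp add: sum_tamari_mobius_below)
qed

function M_coeff :: "(tree \<Rightarrow> rat) \<Rightarrow> tree \<Rightarrow> rat" where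
  "M_coeff x u = x u - (\<Sum>v | tamari_le v u \<and> v \<noteq> u. M_coeff x v * Mvec v u)"
  by auto
termination
  by (relation "measure (\<lambda>(x, u). tamari_height u)") (auto intro: tamari_height_less)

declare M_coeff.simps [simp del]

text \<open>Summing the F-coordinates of \<open>M_v\<close> over the lower interval of \<open>r\<close> gives
  \<open>delta(v, r)\<close>, so this sum extracts the coefficient of \<open>M_r\<close>; \<^const>\<open>M_coeff\<close> supplies the
  expansion in the M basis whose existence the definite description in \<^const>\<open>Mcoord\<close> needs.\<close>

lemma Mcoord_eq_sum_below: "Mcoord x r = (\<Sum>u | tamari_le u r. x u)"
proof -
  let ?Y = "Ytrees (nodes r)"
  define P where "P c \<longleftrightarrow> (\<forall>v. v \<notin> ?Y \<longrightarrow> c v = 0) \<and> (\<forall>u\<in>?Y. x u = (\<Sum>v\<in>?Y. c v * Mvec v u))"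
    for c
  define c0 where "c0 v = (if v \<in> ?Y then M_coeff x v else 0)" for v
  have below_Y: "{v. tamari_le v u} = {v \<in> ?Y. tamari_le v u}" if "u \<in> ?Y" for u
    using that tamari_le_nodes by (auto simp: Ytrees_def)
  have "P c0"
    unfolding P_def
  proof (intro conjI allI impI ballI)
    fix u assume u: "u \<in> ?Y"
    have "(\<Sum>v\<in>?Y. c0 v * Mvec v u) = (\<Sum>v | tamari_le v u. M_coeff x v * Mvec v u)"
      by (rule sum.mono_neutral_cong_right)
        (use u below_Y[OF u] in \<open>auto simp: finite_Ytrees c0_def Mvec_def tamari_mobius_eq_0\<close>)
    also have "\<dots> = M_coeff x u * Mvec u u + (\<Sum>v | tamari_le v u \<and> v \<noteq> u. M_coeff x v * Mvec v u)"
    proof -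
      have "{v. tamari_le v u} = insert u {v. tamari_le v u \<and> v \<noteq> u}" by auto
      moreover have "finite {v. tamari_le v u \<and> v \<noteq> u}" by simp
      ultimately show ?thesis by (simp del: insert_Collect)
    qed
    also have "\<dots> = x u" by (simp add: Mvec_def tamari_mobius_refl M_coeff.simps[of x u])
    finally show "x u = (\<Sum>v\<in>?Y. c0 v * Mvec v u)" by simp
  qed (simp add: c0_def)
  have solution: "c v = (\<Sum>u | tamari_le u v. x u)" if "P c" "v \<in> ?Y" for c v
  proof -
    have "(\<Sum>u | tamari_le u v. x u) = (\<Sum>u | tamari_le u v. \<Sum>w\<in>?Y. c w * Mvec w u)"
      using that tamari_le_in_Ytrees[of _ v] by (intro sum.cong) (auto simp: P_def Ytrees_def)
    also have "\<dots> = (\<Sum>w\<in>?Y. c w * of_int (\<Sum>u | tamari_le u v. tamari_mobius w u))"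
      by (subst sum.swap) (simp add: Mvec_def sum_distrib_left)
    also have "\<dots> = c v"
      using that(2) by (simp add: sum_tamari_mobius_below finite_Ytrees if_distrib cong: if_cong)
    finally show ?thesis by simp
  qed
  have "P c \<Longrightarrow> c = c0" for c
    using solution[of c] solution[OF \<open>P c0\<close>] by (auto simp: P_def c0_def)
  then have "P (THE c. P c)" using \<open>P c0\<close> by (metis theI)
  moreover have "r \<in> ?Y" by (simp add: Ytrees_def)
  moreover have "Mcoord x r = (THE c. P c) r" unfolding Mcoord_def P_def by (rule refl)
  ultimately show ?thesis using solution by simp
qed

section \<open>Multisets of leaves and shuffle words\<close>

definition leaf_multisets :: "nat \<Rightarrow> nat \<Rightarrow> nat list set" where
  "leaf_multisets p q = {is. length is = q \<and> sorted is \<and> set is \<subseteq> {0..p}}"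

definition shuffle_words :: "nat \<Rightarrow> nat \<Rightarrow> bool list set" where
  "shuffle_words p q = {w. length w = p + q \<and> length (filter id w) = q}"

text \<open>The multiset \<open>i\<^sub>1 \<le> \<dots> \<le> i\<^sub>q\<close> of leaves of a tree with \<open>p\<close> nodes is encoded by the word
  with \<open>p\<close> letters \<open>False\<close> and \<open>q\<close> letters \<open>True\<close> in which the \<open>k\<close>-th \<open>True\<close> is
  preceded by exactly \<open>i\<^sub>k\<close> letters \<open>False\<close>.\<close>

fun word_of_leaves :: "nat \<Rightarrow> nat list \<Rightarrow> bool list" where
  "word_of_leaves p [] = replicate p False"
| "word_of_leaves p (i # is) = replicate i False @ True # word_of_leaves (p - i) (map (\<lambda>x. x - i) is)"

lemma finite_leaf_multisets: "finite (leaf_multisets p q)"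
  by (rule finite_subset[OF _ finite_lists_length_eq[of "{0..p}" q]]) (auto simp: leaf_multisets_def)

lemma Cons_in_leaf_multisets:
  "i # ks \<in> leaf_multisets p (Suc q) \<longleftrightarrow> i \<le> p \<and> (\<forall>x\<in>set ks. i \<le> x) \<and> ks \<in> leaf_multisets p q"
  by (auto simp: leaf_multisets_def)

lemma sorted_map_minus: "sorted xs \<Longrightarrow> sorted (map (\<lambda>x. x - (i::nat)) xs)"
  by (simp add: sorted_iff_nth_mono diff_le_mono)

lemma map_minus_in_leaf_multisets:
  "ks \<in> leaf_multisets p q \<Longrightarrow> \<forall>x\<in>set ks. i \<le> x \<Longrightarrow> map (\<lambda>x. x - i) ks \<in> leaf_multisets (p - i) q"
  by (auto simp: leaf_multisets_def sorted_map_minus)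

lemma word_of_leaves_append:
  "sorted (xs @ m # ys) \<Longrightarrow> set (xs @ m # ys) \<subseteq> {0..p} \<Longrightarrow>
   word_of_leaves p (xs @ m # ys) = word_of_leaves m xs @ True # word_of_leaves (p - m) (map (\<lambda>y. y - m) ys)"
proof (induction "length xs" arbitrary: xs p m ys rule: less_induct)
  case less
  show ?case
  proof (cases xs)
    case (Cons x xs')
    have xm: "x \<le> m" and ys: "\<forall>y\<in>set ys. m \<le> y" and mp: "m \<le> p"
      using less.prems Cons by (auto simp: sorted_append)
    let ?xs = "map (\<lambda>y. y - x) xs'" and ?ys = "map (\<lambda>y. y - x) ys"
    have "sorted (map (\<lambda>y. y - x) (xs' @ m # ys))"
      using less.prems Cons by (intro sorted_map_minus) simp
    then have "sorted (?xs @ (m - x) # ?ys)" by simp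
    moreover have "set (?xs @ (m - x) # ?ys) \<subseteq> {0..p - x}" using less.prems Cons by auto
    ultimately have IH: "word_of_leaves (p - x) (?xs @ (m - x) # ?ys) =
      word_of_leaves (m - x) ?xs @ True # word_of_leaves (p - x - (m - x)) (map (\<lambda>y. y - (m - x)) ?ys)"
      using less.hyps[of ?xs] Cons by simp
    have shift: "map (\<lambda>y. y - (m - x)) ?ys = map (\<lambda>y. y - m) ys" "p - x - (m - x) = p - m"
      using ys xm mp by auto
    have "word_of_leaves p (xs @ m # ys) =
        replicate x False @ True # word_of_leaves (p - x) (?xs @ (m - x) # ?ys)"
      using Cons by simp
    also have "\<dots> = replicate x False @ True # word_of_leaves (m - x) ?xs @
        True # word_of_leaves (p - m) (map (\<lambda>y. y - m) ys)"
      by (simp only: IH shift append_Cons)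
    also have "\<dots> = word_of_leaves m xs @ True # word_of_leaves (p - m) (map (\<lambda>y. y - m) ys)"
      using Cons by simp
    finally show ?thesis .
  qed simp
qed

lemma word_of_leaves_in_shuffle_words: "ks \<in> leaf_multisets p q \<Longrightarrow> word_of_leaves p ks \<in> shuffle_words p q"
proof (induction q arbitrary: ks p)
  case 0
  then show ?case by (simp add: leaf_multisets_def shuffle_words_def)
next
  case (Suc q)
  then obtain i ks' where ks: "ks = i # ks'" by (cases ks) (auto simp: leaf_multisets_def)
  with Suc.prems have "i \<le> p" "map (\<lambda>x. x - i) ks' \<in> leaf_multisets (p - i) q"
    by (auto simp: Cons_in_leaf_multisets intro: map_minus_in_leaf_multisets)
  with Suc.IH ks show ?case by (auto simp: shuffle_words_def)
qed

lemma replicate_False_True_eq: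
  "replicate i False @ True # xs = replicate j False @ True # ys \<Longrightarrow> i = j \<and> xs = ys"
proof (induction i arbitrary: j)
  case 0
  then show ?case by (cases j) auto
next
  case (Suc i)
  then show ?case by (cases j) auto
qed

lemma inj_on_word_of_leaves: "inj_on (word_of_leaves p) (leaf_multisets p q)"
proof (rule inj_onI)
  fix ks ls
  assume "ks \<in> leaf_multisets p q" "ls \<in> leaf_multisets p q" "word_of_leaves p ks = word_of_leaves p ls"
  then show "ks = ls"
  proof (induction q arbitrary: ks ls p)
    case 0
    then show ?case by (simp add: leaf_multisets_def)
  next
    case (Suc q)
    obtain i ks' j ls' where ks: "ks = i # ks'" and ls: "ls = j # ls'"
      using Suc.prems by (cases ks; cases ls) (auto simp: leaf_multisets_def)
    have i: "\<forall>x\<in>set ks'. i \<le> x" "ks' \<in> leaf_multisets p q"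
      and j: "\<forall>x\<in>set ls'. j \<le> x" "ls' \<in> leaf_multisets p q"
      using Suc.prems ks ls by (auto simp: Cons_in_leaf_multisets)
    have "i = j" and "word_of_leaves (p - i) (map (\<lambda>x. x - i) ks') = word_of_leaves (p - i) (map (\<lambda>x. x - i) ls')"
      using Suc.prems(3) ks ls by (auto dest: replicate_False_True_eq)
    then have "map (\<lambda>x. x - i) ks' = map (\<lambda>x. x - i) ls'"
      using Suc.IH i j map_minus_in_leaf_multisets by blast
    moreover have "inj_on (\<lambda>x. x - i) (set ks' \<union> set ls')"
      using i j \<open>i = j\<close> by (intro inj_on_diff_nat) auto
    ultimately show ?case using ks ls \<open>i = j\<close> inj_on_map_eq_map by blast
  qed
qed

lemma word_of_leaves_surj: "w \<in> shuffle_words p q \<Longrightarrow> \<exists>ks \<in> leaf_multisets p q. word_of_leaves p ks = w"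
proof (induction q arbitrary: p w)
  case 0
  then have "w = replicate p False"
    by (auto simp: shuffle_words_def filter_empty_conv replicate_length_same)
  then show ?case by (intro bexI[of _ "[]"]) (auto simp: leaf_multisets_def)
next
  case (Suc q)
  then have "filter id w \<noteq> []" by (auto simp: shuffle_words_def)
  then have "True \<in> set w" by (metis filter_empty_conv id_apply)
  then obtain us w' where "w = us @ True # w'" "True \<notin> set us"
    using split_list_first by metis
  then obtain i where w: "w = replicate i False @ True # w'"
    by (metis (full_types) replicate_length_same)
  have "i \<le> p" using Suc.prems w length_filter_le[of id w'] by (simp add: shuffle_words_def)
  then have "w' \<in> shuffle_words (p - i) q" using Suc.prems w by (auto simp: shuffle_words_def)
  then obtain js where js: "js \<in> leaf_multisets (p - i) q" "word_of_leaves (p - i) js = w'"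
    using Suc.IH by blast
  let ?ks = "i # map (\<lambda>x. x + i) js"
  have "?ks \<in> leaf_multisets p (Suc q)"
    using js(1) \<open>i \<le> p\<close> by (auto simp: leaf_multisets_def sorted_map)
  moreover have "word_of_leaves p ?ks = w" using w js(2) by (simp add: comp_def)
  ultimately show ?case by blast
qed

lemma bij_betw_word_of_leaves: "bij_betw (word_of_leaves p) (leaf_multisets p q) (shuffle_words p q)"
  unfolding bij_betw_def
  using inj_on_word_of_leaves word_of_leaves_in_shuffle_words word_of_leaves_surj by blast

section \<open>The terms of a product\<close>

lemma split_at_split_at:
  "m \<le> z \<Longrightarrow> z \<le> nodes s \<Longrightarrow>
    fst (split_at (fst (split_at s z)) m) = fst (split_at s m) \<and>
    snd (split_at (fst (split_at s z)) m) = fst (split_at (snd (split_at s m)) (z - m)) \<and>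
    snd (split_at s z) = snd (split_at (snd (split_at s m)) (z - m))"
proof (induction s arbitrary: m z)
  case (Node l r)
  consider "z \<le> nodes l" | "m \<le> nodes l" "nodes l < z" | "nodes l < m" by linarith
  then show ?case
  proof cases
    case 1
    have "nodes (snd (split_at l m)) = nodes l - m" "nodes (fst (split_at l z)) = z"
      using nodes_split_at[of m l] nodes_split_at[of z l] 1 Node.prems by auto
    moreover have "z - m \<le> nodes l - m" using 1 by simp
    ultimately show ?thesis using 1 Node.prems Node.IH(1)[of m z] by (simp add: split_beta)
  next
    case 2
    have "nodes (snd (split_at l m)) = nodes l - m" using nodes_split_at[of m l] 2 by simp
    moreover have "z - m - (nodes l - m) - 1 = z - nodes l - 1" "\<not> z - m \<le> nodes l - m"
      using 2 by auto
    ultimately show ?thesis using 2 Node.prems by (simp add: split_beta)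
  next
    case 3
    have "nodes (fst (split_at r (z - Suc (nodes l)))) = z - Suc (nodes l)"
      using nodes_split_at[of "z - Suc (nodes l)" r] 3 Node.prems by simp
    moreover have "z - Suc (nodes l) - (m - Suc (nodes l)) = z - m" using 3 Node.prems by simp
    ultimately show ?thesis
      using 3 Node.prems Node.IH(2)[of "m - Suc (nodes l)" "z - Suc (nodes l)"]
      by (simp add: split_beta)
  qed
qed simp

lemma length_divide_rev: "length (divide_rev s zs) = Suc (length zs)"
  by (induction zs arbitrary: s) (auto simp: split_beta)

lemma length_divide: "length (divide s ks) = Suc (length ks)"
  by (simp add: divide_def length_divide_rev)

lemma divide_rev_append:
  "\<forall>y\<in>set zs. m \<le> y \<and> y \<le> nodes s \<Longrightarrow> sorted_wrt (\<ge>) zs \<Longrightarrow> m \<le> nodes s \<Longrightarrow>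
   divide_rev s (zs @ m # xs) =
     divide_rev (fst (split_at s m)) xs @ divide_rev (snd (split_at s m)) (map (\<lambda>y. y - m) zs)"
proof (induction zs arbitrary: s)
  case Nil
  then show ?case by (simp add: split_beta)
next
  case (Cons z zs)
  let ?t = "fst (split_at s z)"
  have mz: "m \<le> z" "z \<le> nodes s" using Cons.prems by auto
  then have "nodes ?t = z" using nodes_split_at[of z s] by simp
  then have "divide_rev ?t (zs @ m # xs) =
      divide_rev (fst (split_at ?t m)) xs @ divide_rev (snd (split_at ?t m)) (map (\<lambda>y. y - m) zs)"
    using Cons.IH[of ?t] Cons.prems mz by auto
  then show ?case using split_at_split_at[OF mz] by (simp add: split_beta)
qed

lemma divide_append:
  assumes "sorted (xs @ m # ys)" "set (xs @ m # ys) \<subseteq> {0..nodes s}"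
  shows "divide s (xs @ m # ys) =
    divide (fst (split_at s m)) xs @ divide (snd (split_at s m)) (map (\<lambda>y. y - m) ys)"
proof -
  have "divide_rev s (rev ys @ m # rev xs) = divide_rev (fst (split_at s m)) (rev xs) @
      divide_rev (snd (split_at s m)) (map (\<lambda>y. y - m) (rev ys))"
    by (rule divide_rev_append) (use assms in \<open>auto simp: sorted_append sorted_wrt_rev\<close>)
  then show ?thesis by (simp add: divide_def rev_map)
qed

definition letter_rank :: "bool \<Rightarrow> bool list \<Rightarrow> nat \<Rightarrow> nat" where
  "letter_rank b w i = length (filter (\<lambda>x. x = b) (take i w))"

text \<open>Positions of \<open>w\<close> carrying \<open>False\<close> (resp. \<open>True\<close>) stand for the nodes of the first
  (resp. second) tree, whose index in that tree is recovered by \<^const>\<open>letter_rank\<close>.\<close>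

definition shuffle_pairs :: "bool list \<Rightarrow> (nat \<times> nat) set \<Rightarrow> (nat \<times> nat) set \<Rightarrow> (nat \<times> nat) set" where
  "shuffle_pairs w A B = {(i, j). i < j \<and> j < length w \<and>
     (\<not> w ! i \<and> w ! j \<or>
      \<not> w ! i \<and> \<not> w ! j \<and> (letter_rank False w i, letter_rank False w j) \<in> A \<or>
      w ! i \<and> w ! j \<and> (letter_rank True w i, letter_rank True w j) \<in> B)}"

lemma letter_rank_append_low: "k \<le> length w1 \<Longrightarrow> letter_rank b (w1 @ w2) k = letter_rank b w1 k"
  by (simp add: letter_rank_def)

lemma letter_rank_append_high:
  "letter_rank b (w1 @ True # w2) (Suc (length w1) + x) =
    letter_rank b w1 (length w1) + (if b then 1 else 0) + letter_rank b w2 x"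
  by (simp add: letter_rank_def)

lemma letter_rank_less:
  assumes "k < length w" "w ! k = b"
  shows "letter_rank b w k < letter_rank b w (length w)"
proof -
  have "letter_rank b w (Suc k) = Suc (letter_rank b w k)"
    using assms by (simp add: letter_rank_def take_Suc_conv_app_nth)
  moreover have "letter_rank b w (Suc k) \<le> letter_rank b w (length w)"
    unfolding letter_rank_def by (metis append_take_drop_id filter_append le_add1 length_append take_all order_refl)
  ultimately show ?thesis by simp
qed

lemma letter_rank_card: "i \<le> length w \<Longrightarrow> letter_rank b w i = card {k. k < i \<and> w ! k = b}"
  unfolding letter_rank_def by (subst length_filter_conv_card) (auto intro: arg_cong[where f = card])

lemma letter_rank_True_length: "letter_rank True w (length w) = length (filter id w)"
  by (simp add: letter_rank_def) (metis filter_cong id_apply)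

lemma letter_rank_True_plus_False:
  "letter_rank True w (length w) + letter_rank False w (length w) = length w"
  by (induction w) (auto simp: letter_rank_def)

lemma letter_counts_shuffle_words:
  assumes "w \<in> shuffle_words p q"
  shows "letter_rank True w (length w) = q" "letter_rank False w (length w) = p" "length w = p + q"
proof -
  show True_count: "letter_rank True w (length w) = q"
    unfolding letter_rank_True_length using assms by (simp add: shuffle_words_def)
  show "length w = p + q" using assms by (simp add: shuffle_words_def)
  then show "letter_rank False w (length w) = p"
    using True_count letter_rank_True_plus_False[of w] by simp
qed

lemma interval_kernel_shuffle_pairs_Node:
  assumes counts: "letter_rank False wl (length wl) = m" "letter_rank True wl (length wl) = nodes l"
    and "m \<le> nodes s"
  shows "interval_kernel (shuffle_pairs (wl @ True # wr) (ldesc s) (ldesc (Node l r))) (length wl + 1 + length wr) =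
    interval_kernel (shuffle_pairs wl (ldesc (fst (split_at s m))) (ldesc l)) (length wl) \<union>
    {(i, length wl) | i. i < length wl} \<union>
    shift_pairs (Suc (length wl)) (interval_kernel (shuffle_pairs wr (ldesc (snd (split_at s m))) (ldesc r)) (length wr))"
proof -
  let ?w = "wl @ True # wr" and ?L = "length wl"
  let ?N = "shuffle_pairs ?w (ldesc s) (ldesc (Node l r))"
  have "interval_kernel ?N (length wl + 1 + length wr) =
    interval_kernel (shuffle_pairs wl (ldesc (fst (split_at s m))) (ldesc l)) ?L \<union> {(i, ?L) | i. i < ?L} \<union>
    shift_pairs (Suc ?L) (interval_kernel (shuffle_pairs wr (ldesc (snd (split_at s m))) (ldesc r))
      (length wl + 1 + length wr - Suc ?L))"
  proof (rule interval_kernel_pivot)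
    fix k j assume kj: "k < j" "j < ?L"
    have letters: "?w ! k = wl ! k" "?w ! j = wl ! j" using kj by (auto simp: nth_append)
    have ranks: "letter_rank b ?w k = letter_rank b wl k" "letter_rank b ?w j = letter_rank b wl j" for b
      using kj letter_rank_append_low[of _ wl] by auto
    have F: "(letter_rank False wl k, letter_rank False wl j) \<in> ldesc s \<longleftrightarrow>
        (letter_rank False wl k, letter_rank False wl j) \<in> ldesc (fst (split_at s m))" if "\<not> wl ! j"
      using letter_rank_less[of j wl False] that kj counts ldesc_split_at_fst[OF \<open>m \<le> nodes s\<close>] by simp
    have T: "(letter_rank True wl k, letter_rank True wl j) \<in> ldesc (Node l r) \<longleftrightarrow>
        (letter_rank True wl k, letter_rank True wl j) \<in> ldesc l" if "wl ! j"
      using letter_rank_less[of j wl True] that kj counts ldesc_Node_left by simp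
    show "(k, j) \<in> ?N \<longleftrightarrow> (k, j) \<in> shuffle_pairs wl (ldesc (fst (split_at s m))) (ldesc l)"
      using kj F T by (cases "wl ! j") (simp_all add: shuffle_pairs_def letters ranks)
  next
    fix k assume k: "k < ?L"
    have "wl ! k \<Longrightarrow> letter_rank True wl k < nodes l"
      using letter_rank_less[of k wl] k counts by auto
    then show "(k, ?L) \<in> ?N"
      using k counts letter_rank_append_low[of k wl] letter_rank_append_low[of ?L wl]
      by (auto simp: shuffle_pairs_def nth_append mem_ldesc_Node)
  next
    fix j assume j: "?L < j" "j < length wl + 1 + length wr"
    define y where "y = j - Suc ?L"
    then have y: "j = Suc ?L + y" using j by simp
    then have "letter_rank True ?w j = Suc (nodes l) + letter_rank True wr y"
      using letter_rank_append_high[of True wl wr] counts by simp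
    then show "(?L, j) \<notin> ?N"
      using ldesc_Node_root[of l _ r] counts letter_rank_append_low[of ?L wl True]
      by (auto simp: shuffle_pairs_def nth_append)
  next
    fix k j assume kj: "?L < k" "k < j" "j < length wl + 1 + length wr"
    define x y where "x = k - Suc ?L" and "y = j - Suc ?L"
    then have xy: "k = Suc ?L + x" "j = Suc ?L + y" using kj by simp_all
    then have "letter_rank False ?w k = m + letter_rank False wr x"
      "letter_rank False ?w j = m + letter_rank False wr y"
      "letter_rank True ?w k = Suc (nodes l) + letter_rank True wr x"
      "letter_rank True ?w j = Suc (nodes l) + letter_rank True wr y"
      using letter_rank_append_high[of _ wl wr] counts by simp_all
    moreover have "(m + a, m + b) \<in> ldesc s \<longleftrightarrow> (a, b) \<in> ldesc (snd (split_at s m))" for a b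
      using ldesc_split_at_snd[OF \<open>m \<le> nodes s\<close>, of a b] by (simp add: add.commute)
    ultimately show "(k, j) \<in> ?N \<longleftrightarrow>
        (k - Suc ?L, j - Suc ?L) \<in> shuffle_pairs wr (ldesc (snd (split_at s m))) (ldesc r)"
      using kj xy ldesc_Node_right[of l, simplified] by (auto simp: shuffle_pairs_def nth_append)
  qed simp
  then show ?thesis by simp
qed

lemma letter_rank_replicate: "i \<le> p \<Longrightarrow> letter_rank False (replicate p False) i = i"
  by (simp add: letter_rank_def)

theorem graft_divide_nodes_ldesc:
  "ks \<in> leaf_multisets (nodes s) (nodes t) \<Longrightarrow>
    nodes (graft t (divide s ks)) = nodes s + nodes t \<and>
    ldesc (graft t (divide s ks)) =
      interval_kernel (shuffle_pairs (word_of_leaves (nodes s) ks) (ldesc s) (ldesc t)) (nodes s + nodes t)"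
proof (induction t arbitrary: s ks)
  case Leaf
  then have ks: "ks = []" by (simp add: leaf_multisets_def)
  have "shuffle_pairs (replicate (nodes s) False) (ldesc s) {} = ldesc s"
  proof (intro set_eqI, clarify)
    fix i j
    show "(i, j) \<in> shuffle_pairs (replicate (nodes s) False) (ldesc s) {} \<longleftrightarrow> (i, j) \<in> ldesc s"
      using ldesc_bounded[of i j s] letter_rank_replicate[of i "nodes s"] letter_rank_replicate[of j "nodes s"]
      by (auto simp: shuffle_pairs_def)
  qed
  then show ?case using ks by (simp add: divide_def interval_kernel_ldesc)
next
  case (Node l r)
  let ?p = "nodes s"
  have len: "length ks = nodes l + 1 + nodes r" and "sorted ks" "set ks \<subseteq> {0..?p}"
    using Node.prems by (auto simp: leaf_multisets_def)
  define xs m ys where "xs = take (nodes l) ks" and "m = ks ! nodes l" and "ys = drop (Suc (nodes l)) ks"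
  have ks: "ks = xs @ m # ys" using len by (simp add: xs_def m_def ys_def id_take_nth_drop)
  have sorted: "sorted (xs @ m # ys)" and bounded: "set (xs @ m # ys) \<subseteq> {0..?p}"
    using \<open>sorted ks\<close> \<open>set ks \<subseteq> {0..?p}\<close> ks by auto
  then have "m \<le> ?p" by auto
  let ?a = "fst (split_at s m)" and ?b = "snd (split_at s m)" and ?ys = "map (\<lambda>y. y - m) ys"
  have a: "nodes ?a = m" and b: "nodes ?b = ?p - m" using nodes_split_at[OF \<open>m \<le> ?p\<close>] by auto
  have xs_in: "xs \<in> leaf_multisets m (nodes l)"
    using sorted bounded len by (auto simp: leaf_multisets_def xs_def sorted_append)
  have ys_in: "?ys \<in> leaf_multisets (?p - m) (nodes r)"
    using sorted bounded len by (auto simp: leaf_multisets_def ys_def sorted_append intro: sorted_map_minus)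
  define wl wr where "wl = word_of_leaves m xs" and "wr = word_of_leaves (?p - m) ?ys"
  define gl gr where "gl = graft l (divide ?a xs)" and "gr = graft r (divide ?b ?ys)"
  have counts: "letter_rank False wl (length wl) = m" "letter_rank True wl (length wl) = nodes l"
    "length wl = m + nodes l" "length wr = ?p - m + nodes r"
    using letter_counts_shuffle_words[OF word_of_leaves_in_shuffle_words[OF xs_in]]
      letter_counts_shuffle_words[OF word_of_leaves_in_shuffle_words[OF ys_in]]
    by (simp_all add: wl_def wr_def)
  have "graft (Node l r) (divide s ks) = Node gl gr"
    using divide_append[OF sorted bounded] ks xs_in
    by (simp add: gl_def gr_def length_divide leaf_multisets_def)
  moreover have "word_of_leaves ?p ks = wl @ True # wr"
    using word_of_leaves_append[OF sorted bounded] ks by (simp add: wl_def wr_def)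
  moreover have "nodes gl = length wl"
    "ldesc gl = interval_kernel (shuffle_pairs wl (ldesc ?a) (ldesc l)) (length wl)"
    using Node.IH(1)[where s = ?a and ks = xs] xs_in a counts by (simp_all add: gl_def wl_def)
  moreover have "nodes gr = length wr"
    "ldesc gr = interval_kernel (shuffle_pairs wr (ldesc ?b) (ldesc r)) (length wr)"
    using Node.IH(2)[where s = ?b and ks = ?ys] ys_in b counts by (simp_all add: gr_def wr_def)
  moreover have "length wl + 1 + length wr = ?p + nodes (Node l r)"
    using counts \<open>m \<le> ?p\<close> by simp
  ultimately show ?case
    using interval_kernel_shuffle_pairs_Node[OF counts(1,2) \<open>m \<le> ?p\<close>, of wr r]
    by (simp add: ldesc.simps(2))
qed

definition letter_positions :: "bool \<Rightarrow> bool list \<Rightarrow> nat set" where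
  "letter_positions b w = Suc ` {i. i < length w \<and> w ! i = b}"

lemma letter_positions_subset: "letter_positions b w \<subseteq> {1..length w}"
  by (auto simp: letter_positions_def)

lemma Suc_in_letter_positions: "i < length w \<Longrightarrow> Suc i \<in> letter_positions b w \<longleftrightarrow> w ! i = b"
  by (auto simp: letter_positions_def)

lemma letter_positions_compl: "{1..length w} - letter_positions False w = letter_positions True w"
proof (intro set_eqI iffI)
  fix x assume x: "x \<in> {1..length w} - letter_positions False w"
  then obtain i where "x = Suc i" "i < length w" by (cases x) auto
  with x show "x \<in> letter_positions True w" by (auto simp: Suc_in_letter_positions)
qed (auto simp: letter_positions_def)

lemma letter_positions_indicator_word:
  assumes "R \<subseteq> {1..n}"
  shows "letter_positions False (map (\<lambda>i. Suc i \<notin> R) [0..<n]) = R"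
proof (intro set_eqI iffI)
  fix x assume "x \<in> R"
  moreover from this obtain i where "x = Suc i" "i < n" using assms by (cases x) auto
  ultimately show "x \<in> letter_positions False (map (\<lambda>i. Suc i \<notin> R) [0..<n])"
    by (simp add: Suc_in_letter_positions)
qed (auto simp: letter_positions_def)

lemma card_letter_positions: "card (letter_positions b w) = letter_rank b w (length w)"
  by (simp add: letter_positions_def card_image letter_rank_card)

lemma rank_letter_positions:
  "i \<le> length w \<Longrightarrow> rank (letter_positions b w) (Suc i) = letter_rank b w i"
proof -
  assume "i \<le> length w"
  then have "{y \<in> letter_positions b w. y < Suc i} = Suc ` {k. k < i \<and> w ! k = b}"
    by (auto simp: letter_positions_def)
  then show ?thesis using \<open>i \<le> length w\<close> by (simp add: rank_def card_image letter_rank_card)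
qed

lemma bij_betw_letter_positions:
  "bij_betw (letter_positions False) (shuffle_words p q) {R. R \<subseteq> {1..p + q} \<and> card R = p}"
proof (rule bij_betw_byWitness[where f' = "\<lambda>R. map (\<lambda>i. Suc i \<notin> R) [0..<p + q]"])
  show "\<forall>w\<in>shuffle_words p q. map (\<lambda>i. Suc i \<notin> letter_positions False w) [0..<p + q] = w"
    by (auto simp: shuffle_words_def Suc_in_letter_positions intro: nth_equalityI)
  show "\<forall>R\<in>{R. R \<subseteq> {1..p + q} \<and> card R = p}. letter_positions False (map (\<lambda>i. Suc i \<notin> R) [0..<p + q]) = R"
    by (simp add: letter_positions_indicator_word)
  show "letter_positions False ` shuffle_words p q \<subseteq> {R. R \<subseteq> {1..p + q} \<and> card R = p}"
  proof
    fix R assume "R \<in> letter_positions False ` shuffle_words p q"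
    then obtain w where w: "w \<in> shuffle_words p q" "R = letter_positions False w" by blast
    then show "R \<in> {R. R \<subseteq> {1..p + q} \<and> card R = p}"
      using letter_positions_subset[of False w] letter_counts_shuffle_words[OF w(1)]
        card_letter_positions[of False w] by simp
  qed
  show "(\<lambda>R. map (\<lambda>i. Suc i \<notin> R) [0..<p + q]) ` {R. R \<subseteq> {1..p + q} \<and> card R = p} \<subseteq> shuffle_words p q"
  proof
    fix w assume "w \<in> (\<lambda>R. map (\<lambda>i. Suc i \<notin> R) [0..<p + q]) ` {R. R \<subseteq> {1..p + q} \<and> card R = p}"
    then obtain R where R: "R \<subseteq> {1..p + q}" "card R = p" and w: "w = map (\<lambda>i. Suc i \<notin> R) [0..<p + q]"
      by blast
    then have "letter_rank False w (length w) = p"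
      using letter_positions_indicator_word[OF R(1)] card_letter_positions[of False w] by simp
    then have "letter_rank True w (length w) = q" using letter_rank_True_plus_False[of w] w by simp
    then have "length (filter id w) = q" by (simp only: letter_rank_True_length)
    moreover have "length w = p + q" using w by simp
    ultimately show "w \<in> shuffle_words p q" unfolding shuffle_words_def by blast
  qed
qed

section \<open>Counting the terms below r\<close>

lemma le_tree_restr_letter_positions_iff:
  assumes "length w = nodes r" "nodes s = letter_rank b w (length w)"
  shows "tamari_le s (tree_restr r (letter_positions b w)) \<longleftrightarrow>
    (\<forall>(i, j)\<in>ldesc r. w ! i = b \<longrightarrow> w ! j = b \<longrightarrow> (letter_rank b w i, letter_rank b w j) \<in> ldesc s)"
proof -
  let ?R = "letter_positions b w"
  have "tamari_le s (tree_restr r ?R) \<longleftrightarrow>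
      (\<forall>x\<in>?R. \<forall>y\<in>?R. (x - 1, y - 1) \<in> ldesc r \<longrightarrow> (rank ?R x, rank ?R y) \<in> ldesc s)"
    using le_tree_restr_iff[of ?R r s] letter_positions_subset[of b w] assms
    by (simp add: card_letter_positions)
  also have "\<dots> \<longleftrightarrow> (\<forall>i<length w. \<forall>j<length w. w ! i = b \<longrightarrow> w ! j = b \<longrightarrow>
      (i, j) \<in> ldesc r \<longrightarrow> (letter_rank b w i, letter_rank b w j) \<in> ldesc s)"
  proof -
    have ball: "(\<forall>x\<in>?R. Q x) \<longleftrightarrow> (\<forall>i<length w. w ! i = b \<longrightarrow> Q (Suc i))" for Q
      by (auto simp: letter_positions_def)
    show ?thesis by (simp only: ball) (auto simp: rank_letter_positions)
  qed
  also have "\<dots> \<longleftrightarrow>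
      (\<forall>(i, j)\<in>ldesc r. w ! i = b \<longrightarrow> w ! j = b \<longrightarrow> (letter_rank b w i, letter_rank b w j) \<in> ldesc s)"
    using ldesc_bounded[of _ _ r] assms(1) by fastforce
  finally show ?thesis .
qed

lemma ldesc_subset_shuffle_pairs_iff:
  assumes w: "w \<in> shuffle_words p q" and r: "nodes r = p + q"
    and s: "nodes s = p" and t: "nodes t = q"
  shows "ldesc r \<subseteq> shuffle_pairs w (ldesc s) (ldesc t) \<longleftrightarrow>
    tamari_le (lam (piR (p + q) (letter_positions False w))) r \<and>
    tamari_le s (tree_restr r (letter_positions False w)) \<and>
    tamari_le t (tree_restr r ({1..p + q} - letter_positions False w))"
proof -
  have len: "length w = p + q" using letter_counts_shuffle_words[OF w] by simp
  have bounded: "i < j \<and> j < p + q" if "(i, j) \<in> ldesc r" for i j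
    using ldesc_bounded[OF that] r by simp
  have "ldesc r \<subseteq> shuffle_pairs w (ldesc s) (ldesc t) \<longleftrightarrow>
      (\<forall>(i, j)\<in>ldesc r. Suc i \<in> letter_positions False w \<or> Suc j \<notin> letter_positions False w) \<and>
      (\<forall>(i, j)\<in>ldesc r. w ! i = False \<longrightarrow> w ! j = False \<longrightarrow>
        (letter_rank False w i, letter_rank False w j) \<in> ldesc s) \<and>
      (\<forall>(i, j)\<in>ldesc r. w ! i = True \<longrightarrow> w ! j = True \<longrightarrow>
        (letter_rank True w i, letter_rank True w j) \<in> ldesc t)"
  proof -
    have pointwise: "(i, j) \<in> shuffle_pairs w (ldesc s) (ldesc t) \<longleftrightarrow>
        (Suc i \<in> letter_positions False w \<or> Suc j \<notin> letter_positions False w) \<and>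
        (w ! i = False \<longrightarrow> w ! j = False \<longrightarrow> (letter_rank False w i, letter_rank False w j) \<in> ldesc s) \<and>
        (w ! i = True \<longrightarrow> w ! j = True \<longrightarrow> (letter_rank True w i, letter_rank True w j) \<in> ldesc t)"
      if "(i, j) \<in> ldesc r" for i j
      using bounded[OF that] len
      by (cases "w ! i"; cases "w ! j") (simp_all add: shuffle_pairs_def Suc_in_letter_positions)
    show ?thesis by (auto simp: subset_iff pointwise)
  qed
  moreover have "tamari_le (lam (piR (p + q) (letter_positions False w))) r \<longleftrightarrow>
      (\<forall>(i, j)\<in>ldesc r. Suc i \<in> letter_positions False w \<or> Suc j \<notin> letter_positions False w)"
    using piR_le_iff[OF _ r] letter_positions_subset[of False w] len by simp
  moreover have "tamari_le s (tree_restr r (letter_positions False w)) \<longleftrightarrow>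
      (\<forall>(i, j)\<in>ldesc r. w ! i = False \<longrightarrow> w ! j = False \<longrightarrow>
        (letter_rank False w i, letter_rank False w j) \<in> ldesc s)"
    using le_tree_restr_letter_positions_iff letter_counts_shuffle_words[OF w] len r s by simp
  moreover have "tamari_le t (tree_restr r ({1..p + q} - letter_positions False w)) \<longleftrightarrow>
      (\<forall>(i, j)\<in>ldesc r. w ! i = True \<longrightarrow> w ! j = True \<longrightarrow>
        (letter_rank True w i, letter_rank True w j) \<in> ldesc t)"
  proof -
    have "{1..p + q} - letter_positions False w = letter_positions True w"
      using letter_positions_compl[of w] len by simp
    then show ?thesis
      using le_tree_restr_letter_positions_iff[of w r t True] letter_counts_shuffle_words[OF w] len r t
      by simp
  qed
  ultimately show ?thesis by blast
qed

lemma prodF_eq_card: "prodF s t u = of_nat (card {ks \<in> leaf_multisets (nodes s) (nodes t). graft t (divide s ks) = u})"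
  unfolding prodF_def leaf_multisets_def by (simp add: conj_assoc)

lemma sum_prodF_below_eq_card:
  "(\<Sum>u | tamari_le u r. prodF s t u) =
    of_nat (card {ks \<in> leaf_multisets (nodes s) (nodes t). tamari_le (graft t (divide s ks)) r})"
proof -
  let ?A = "{ks \<in> leaf_multisets (nodes s) (nodes t). tamari_le (graft t (divide s ks)) r}"
  have "(\<Sum>u | tamari_le u r. card {ks \<in> leaf_multisets (nodes s) (nodes t). graft t (divide s ks) = u}) =
      (\<Sum>u | tamari_le u r. card {ks \<in> ?A. graft t (divide s ks) = u})"
    by (intro sum.cong) (auto intro: arg_cong[where f = card])
  also have "\<dots> = card ?A"
    using sum.group[of ?A "{u. tamari_le u r}" "\<lambda>ks. graft t (divide s ks)" "\<lambda>_. 1::nat"]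
    by (auto simp: finite_leaf_multisets)
  finally show ?thesis by (simp add: prodF_eq_card flip: of_nat_sum)
qed

lemma card_eq_nodes_if_le_tree_restr:
  "R \<subseteq> {1..nodes r} \<Longrightarrow> tamari_le s (tree_restr r R) \<Longrightarrow> card R = nodes s"
  using nodes_tree_restr tamari_le_nodes by metis

lemma sum_prodF_below:
  assumes r: "nodes r = n"
  shows "(\<Sum>u | tamari_le u r. prodF s t u) =
    of_nat (card {R. R \<subseteq> {1..n} \<and> tamari_le (lam (piR n R)) r \<and>
      tamari_le s (tree_restr r R) \<and> tamari_le t (tree_restr r ({1..n} - R))})"
proof -
  let ?p = "nodes s" and ?q = "nodes t"
  let ?C = "\<lambda>R. tamari_le (lam (piR n R)) r \<and> tamari_le s (tree_restr r R) \<and> tamari_le t (tree_restr r ({1..n} - R))"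
  have sizes: "card R = ?p \<and> ?p + ?q = n" if "R \<subseteq> {1..n}" "?C R" for R
  proof -
    have "card R = ?p" "card ({1..n} - R) = ?q"
      using that r card_eq_nodes_if_le_tree_restr[of _ r] by auto
    moreover have "card ({1..n} - R) = n - card R" "card R \<le> n"
      using that(1) card_Diff_subset[of R "{1..n}"] card_mono[of "{1..n}" R] finite_subset[of R "{1..n}"]
      by auto
    ultimately show ?thesis by simp
  qed
  show ?thesis
  proof (cases "?p + ?q = n")
    case False
    have "\<not> tamari_le (graft t (divide s ks)) r" if "ks \<in> leaf_multisets ?p ?q" for ks
      using graft_divide_nodes_ldesc[OF that] tamari_le_nodes False r by metis
    then have "{ks \<in> leaf_multisets ?p ?q. tamari_le (graft t (divide s ks)) r} = {}" by blast
    moreover have "{R. R \<subseteq> {1..n} \<and> ?C R} = {}" using sizes False by blast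
    ultimately show ?thesis unfolding sum_prodF_below_eq_card by (simp only: card.empty)
  next
    case True
    have "tamari_le (graft t (divide s ks)) r \<longleftrightarrow> ?C (letter_positions False (word_of_leaves ?p ks))"
      if ks: "ks \<in> leaf_multisets ?p ?q" for ks
    proof -
      let ?w = "word_of_leaves ?p ks"
      have graft: "nodes (graft t (divide s ks)) = nodes r"
        "ldesc (graft t (divide s ks)) = interval_kernel (shuffle_pairs ?w (ldesc s) (ldesc t)) (nodes r)"
        using graft_divide_nodes_ldesc[OF ks] r True by simp_all
      then have "tamari_le (graft t (divide s ks)) r \<longleftrightarrow> ldesc r \<subseteq> shuffle_pairs ?w (ldesc s) (ldesc t)"
        by (simp add: tamari_le_iff_ldesc ldesc_subset_interval_kernel_iff)
      also have "\<dots> \<longleftrightarrow> ?C (letter_positions False ?w)"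
        using ldesc_subset_shuffle_pairs_iff[OF word_of_leaves_in_shuffle_words[OF ks], of r s t] r True
        by simp
      finally show ?thesis .
    qed
    then have "bij_betw (letter_positions False \<circ> word_of_leaves ?p)
        {ks \<in> leaf_multisets ?p ?q. tamari_le (graft t (divide s ks)) r}
        {R \<in> {R. R \<subseteq> {1..?p + ?q} \<and> card R = ?p}. ?C R}"
      by (intro bij_betw_Collect bij_betw_trans[OF bij_betw_word_of_leaves bij_betw_letter_positions]) simp
    moreover have "{R \<in> {R. R \<subseteq> {1..?p + ?q} \<and> card R = ?p}. ?C R} = {R. R \<subseteq> {1..n} \<and> ?C R}"
      using sizes True by blast
    ultimately show ?thesis by (simp add: sum_prodF_below_eq_card bij_betw_same_card)
  qed
qed

lemma LR_coprod_M_eq: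
  "LR_coprod_M r (s, t) = (\<Sum>s'\<in>Ytrees (nodes s). \<Sum>t'\<in>Ytrees (nodes t).
      Mvec s s' * Mvec t t' * (\<Sum>u | tamari_le u r. prodF s' t' u))"
proof -
  have "LR_coprod_M r (s, t) = (\<Sum>u | tamari_le u r. \<Sum>s'\<in>Ytrees (nodes s). \<Sum>t'\<in>Ytrees (nodes t).
      Mvec s s' * Mvec t t' * prodF s' t' u)"
    by (simp add: LR_coprod_M_def Mcoord_eq_sum_below prodM_def)
  also have "\<dots> = (\<Sum>s'\<in>Ytrees (nodes s). \<Sum>t'\<in>Ytrees (nodes t). \<Sum>u | tamari_le u r.
      Mvec s s' * Mvec t t' * prodF s' t' u)"
    by (subst sum.swap) (simp add: sum.swap[of _ "{u. tamari_le u r}"])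
  finally show ?thesis by (simp add: sum_distrib_left)
qed

lemma sum_sum_mult_sum_factor:
  fixes f g :: "'a \<Rightarrow> 'c::comm_semiring_0"
  shows "(\<Sum>a\<in>A. \<Sum>b\<in>B. f a * g b * (\<Sum>i\<in>I. \<phi> i a * \<psi> i b)) =
    (\<Sum>i\<in>I. (\<Sum>a\<in>A. f a * \<phi> i a) * (\<Sum>b\<in>B. g b * \<psi> i b))"
proof -
  have "(\<Sum>a\<in>A. \<Sum>b\<in>B. f a * g b * (\<Sum>i\<in>I. \<phi> i a * \<psi> i b)) =
      (\<Sum>a\<in>A. \<Sum>b\<in>B. \<Sum>i\<in>I. f a * \<phi> i a * (g b * \<psi> i b))"
    by (simp add: sum_distrib_left ac_simps)
  also have "\<dots> = (\<Sum>i\<in>I. \<Sum>a\<in>A. \<Sum>b\<in>B. f a * \<phi> i a * (g b * \<psi> i b))"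
    by (subst sum.swap) (simp add: sum.swap[of _ I])
  finally show ?thesis by (simp add: sum_product)
qed

theorem theorem8p6:
  fixes r :: tree and n :: nat
  assumes "r \<in> Ytrees n"
  shows "LR_coprod_M r =
    (\<lambda>(s, t). \<Sum>R\<in>{R. R \<subseteq> {1..n} \<and> tamari_le (lam (piR n R)) r}.
        (if tree_restr r R = s \<and> tree_restr r ({1..n} - R) = t then 1 else 0))"
proof (rule ext, clarify)
  fix s t
  let ?I = "{R. R \<subseteq> {1..n} \<and> tamari_le (lam (piR n R)) r}"
  let ?X = "\<lambda>R. tree_restr r R" and ?Y = "\<lambda>R. tree_restr r ({1..n} - R)"
  have count: "(\<Sum>u | tamari_le u r. prodF s' t' u) =
      (\<Sum>R\<in>?I. of_bool (tamari_le s' (?X R)) * of_bool (tamari_le t' (?Y R)))" for s' t'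
    using assms by (simp add: Ytrees_def sum_prodF_below Int_def conj_assoc)
  have "LR_coprod_M r (s, t) =
      (\<Sum>R\<in>?I. (\<Sum>s'\<in>Ytrees (nodes s). Mvec s s' * of_bool (tamari_le s' (?X R))) *
        (\<Sum>t'\<in>Ytrees (nodes t). Mvec t t' * of_bool (tamari_le t' (?Y R))))"
    unfolding LR_coprod_M_eq count by (rule sum_sum_mult_sum_factor)
  also have "\<dots> = (\<Sum>R\<in>?I. of_bool (s = ?X R) * of_bool (t = ?Y R))"
    by (simp only: sum_Mvec_of_bool_below)
  also have "\<dots> = (\<Sum>R\<in>?I. if ?X R = s \<and> ?Y R = t then 1 else 0)"
    by (intro sum.cong) auto
  finally show "LR_coprod_M r (s, t) = (\<Sum>R\<in>?I. if ?X R = s \<and> ?Y R = t then 1 else 0)" .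
qed

end
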